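(* Let $\mathbb{F}\in\{\mathbb{R},\mathbb{C},\mathbb{H}\}$, $G=\mathrm{SL}(3,\mathbb{F})$, and let $\mathcal{P}_\sigma$ be the set of minimal $\sigma$-parabolic subgroups of $G$ (minimal parabolic $P$ with $\sigma(P)$ opposite to $P$). The action of $H$ on $\mathcal{P}_\sigma$ by conjugation has exactly three orbits, and these are the $H$-conjugacy classes of $P_1$, $P_2$ and $P_3$.
   Context: $\theta(g)=(g^{-1})^\dagger$, $J=\mathrm{diag}(1,-1,-1)$, $\sigma(g)=J\theta(g)J$, $H$ the identity component of $G^\sigma$. $\mathfrak{a}$ = real traceless diagonal matrices, $e_i(\mathrm{diag}(x_1,x_2,x_3))=x_i$. $\Sigma_1=\{e_1-e_2,e_1-e_3,e_2-e_3\}$, $\Sigma_2=\{e_2-e_1,e_1-e_3,e_2-e_3\}$, $\Sigma_3=\{e_2-e_1,e_3-e_1,e_2-e_3\}$, and $P_i$ is the minimal parabolic subgroup whose Lie algebra contains $\mathfrak{a}$ and whose set of $\mathfrak{a}$-roots is $\Sigma_i$. *)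

theory Defs
  imports "HOL-Analysis.Analysis"
begin

datatype quat = Quat (qRe: real) (qI: real) (qJ: real) (qK: real)

instantiation quat :: ring_1
begin
definition "0 = Quat 0 0 0 0"
definition "1 = Quat 1 0 0 0"
definition "x + y = Quat (qRe x + qRe y) (qI x + qI y) (qJ x + qJ y) (qK x + qK y)"
definition "- x = Quat (- qRe x) (- qI x) (- qJ x) (- qK x)"
definition "x - y = Quat (qRe x - qRe y) (qI x - qI y) (qJ x - qJ y) (qK x - qK y)"
definition "x * y = Quat
   (qRe x * qRe y - qI x * qI y - qJ x * qJ y - qK x * qK y)
   (qRe x * qI y + qI x * qRe y + qJ x * qK y - qK x * qJ y)
   (qRe x * qJ y - qI x * qK y + qJ x * qRe y + qK x * qI y)
   (qRe x * qK y + qI x * qJ y - qJ x * qI y + qK x * qRe y)"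
instance
  by standard (auto simp: zero_quat_def one_quat_def plus_quat_def uminus_quat_def
      minus_quat_def times_quat_def algebra_simps intro: quat.expand)
end

definition quat_coords :: "quat \<Rightarrow> real \<times> real \<times> real \<times> real" where
  "quat_coords q = (qRe q, qI q, qJ q, qK q)"

instantiation quat :: topological_space
begin
definition open_quat_def: "open (U :: quat set) \<longleftrightarrow> (\<exists>V. open V \<and> U = quat_coords -` V)"
instance
proof
  show "open (UNIV :: quat set)" unfolding open_quat_def by (rule exI[of _ UNIV]) auto
next
  fix S T :: "quat set" assume "open S" "open T"
  then obtain V W where "open V" "S = quat_coords -` V" "open W" "T = quat_coords -` W"
    unfolding open_quat_def by blast
  then show "open (S \<inter> T)" unfolding open_quat_def
    by (intro exI[of _ "V \<inter> W"]) auto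
next
  fix K :: "quat set set" assume "\<forall>S\<in>K. open S"
  then have "\<forall>S\<in>K. \<exists>V. open V \<and> S = quat_coords -` V" unfolding open_quat_def by blast
  then obtain f where f: "\<forall>S\<in>K. open (f S) \<and> S = quat_coords -` f S" by metis
  then show "open (\<Union> K)" unfolding open_quat_def
    by (intro exI[of _ "\<Union>(f ` K)"]) auto
qed
end

definition quat_cnj :: "quat \<Rightarrow> quat" where
  "quat_cnj q = Quat (qRe q) (- qI q) (- qJ q) (- qK q)"

text \<open>Standard complex 2x2 representation of a quaternion q = z + w j (z = a + b i, w = c + d i):
  q \<mapsto> [[z, w], [-cnj w, cnj z]].  It is an injective ring homomorphism.\<close>

definition quat_cplx :: "quat \<Rightarrow> complex ^ 2 ^ 2" where
  "quat_cplx q = (let z = Complex (qRe q) (qI q); w = Complex (qJ q) (qK q) in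
     (\<chi> a b. if a = 1 then (if b = 1 then z else w) else (if b = 1 then - cnj w else cnj z)))"

definition qmat_cplx :: "quat ^ 3 ^ 3 \<Rightarrow> complex ^ (3 \<times> 2) ^ (3 \<times> 2)" where
  "qmat_cplx g = (\<chi> p q. quat_cplx (g $ fst p $ fst q) $ snd p $ snd q)"

definition SL3_real :: "(real ^ 3 ^ 3) set" where
  "SL3_real = {g. det g = 1}"

definition SL3_complex :: "(complex ^ 3 ^ 3) set" where
  "SL3_complex = {g. det g = 1}"

text \<open>SL(3,H) = GL(3,H) \<inter> SL(6,C) (reduced norm one).\<close>
definition SL3_quat :: "(quat ^ 3 ^ 3) set" where
  "SL3_quat = {g. det (qmat_cplx g) = 1}"

text \<open>Matrix indices are 1, 2, 3 (elements of the numeral type 3).\<close>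

definition minv :: "'a::ring_1 ^ 3 ^ 3 \<Rightarrow> 'a ^ 3 ^ 3" where
  "minv A = matrix_inv A"

definition ctrans :: "('a \<Rightarrow> 'a) \<Rightarrow> 'a ^ 3 ^ 3 \<Rightarrow> 'a ^ 3 ^ 3" where
  "ctrans cj A = (\<chi> i j. cj (A $ j $ i))"

definition Jmat :: "'a::ring_1 ^ 3 ^ 3" where
  "Jmat = (\<chi> i j. if i = j then (if i = 1 then 1 else - 1) else 0)"

definition theta :: "('a::ring_1 \<Rightarrow> 'a) \<Rightarrow> 'a ^ 3 ^ 3 \<Rightarrow> 'a ^ 3 ^ 3" where
  "theta cj g = ctrans cj (minv g)"

definition sigma :: "('a::ring_1 \<Rightarrow> 'a) \<Rightarrow> 'a ^ 3 ^ 3 \<Rightarrow> 'a ^ 3 ^ 3" where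
  "sigma cj g = Jmat ** theta cj g ** Jmat"

definition Hgrp :: "('a::{ring_1,topological_space} \<Rightarrow> 'a) \<Rightarrow> ('a ^ 3 ^ 3) set \<Rightarrow> ('a ^ 3 ^ 3) set" where
  "Hgrp cj G = connected_component_set {g \<in> G. sigma cj g = g} (mat 1)"

definition conjgrp :: "'a::ring_1 ^ 3 ^ 3 \<Rightarrow> ('a ^ 3 ^ 3) set \<Rightarrow> ('a ^ 3 ^ 3) set" where
  "conjgrp g P = (\<lambda>p. g ** p ** minv g) ` P"

text \<open>The minimal parabolic subgroups P_1, P_2, P_3 containing A (= exp of the real traceless
  diagonal matrices) with a-roots Sigma_1, Sigma_2, Sigma_3; the root space of e_i - e_j is
  spanned by the elementary matrices E_ij, so P_k consists of the elements of G vanishing at the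
  entries (i,j) with e_i - e_j not in Sigma_k \<union> {0}.\<close>

definition P1 :: "('a::ring_1 ^ 3 ^ 3) set \<Rightarrow> ('a ^ 3 ^ 3) set" where
  "P1 G = {g \<in> G. g $ 2 $ 1 = 0 \<and> g $ 3 $ 1 = 0 \<and> g $ 3 $ 2 = 0}"

definition P2 :: "('a::ring_1 ^ 3 ^ 3) set \<Rightarrow> ('a ^ 3 ^ 3) set" where
  "P2 G = {g \<in> G. g $ 1 $ 2 = 0 \<and> g $ 3 $ 1 = 0 \<and> g $ 3 $ 2 = 0}"

definition P3 :: "('a::ring_1 ^ 3 ^ 3) set \<Rightarrow> ('a ^ 3 ^ 3) set" where
  "P3 G = {g \<in> G. g $ 1 $ 2 = 0 \<and> g $ 1 $ 3 = 0 \<and> g $ 3 $ 2 = 0}"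

definition P1opp :: "('a::ring_1 ^ 3 ^ 3) set \<Rightarrow> ('a ^ 3 ^ 3) set" where
  "P1opp G = {g \<in> G. g $ 1 $ 2 = 0 \<and> g $ 1 $ 3 = 0 \<and> g $ 2 $ 3 = 0}"

definition minparabolics :: "('a::ring_1 ^ 3 ^ 3) set \<Rightarrow> ('a ^ 3 ^ 3) set set" where
  "minparabolics G = {conjgrp g (P1 G) | g. g \<in> G}"

text \<open>Two minimal parabolic subgroups are opposite iff they are simultaneously G-conjugate to
  the standard opposite pair (P_1, P_1^-), i.e. their intersection is a common Levi factor.\<close>
definition opposite :: "('a::ring_1 ^ 3 ^ 3) set \<Rightarrow> ('a ^ 3 ^ 3) set \<Rightarrow> ('a ^ 3 ^ 3) set \<Rightarrow> bool" where
  "opposite G P Q \<longleftrightarrow> (\<exists>g\<in>G. P = conjgrp g (P1 G) \<and> Q = conjgrp g (P1opp G))"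

definition sigma_parabolics :: "('a::ring_1 \<Rightarrow> 'a) \<Rightarrow> ('a ^ 3 ^ 3) set \<Rightarrow> ('a ^ 3 ^ 3) set set" where
  "sigma_parabolics cj G = {P \<in> minparabolics G. opposite G P (sigma cj ` P)}"

definition Horbit :: "('a::{ring_1,topological_space} \<Rightarrow> 'a) \<Rightarrow> ('a ^ 3 ^ 3) set \<Rightarrow> ('a ^ 3 ^ 3) set \<Rightarrow> ('a ^ 3 ^ 3) set set" where
  "Horbit cj G P = {conjgrp h P | h. h \<in> Hgrp cj G}"

definition three_orbits :: "('a::{ring_1,topological_space} \<Rightarrow> 'a) \<Rightarrow> ('a ^ 3 ^ 3) set \<Rightarrow> bool" where
  "three_orbits cj G \<longleftrightarrow>
     P1 G \<in> sigma_parabolics cj G \<and> P2 G \<in> sigma_parabolics cj G \<and> P3 G \<in> sigma_parabolics cj G \<and>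
     Horbit cj G ` sigma_parabolics cj G = {Horbit cj G (P1 G), Horbit cj G (P2 G), Horbit cj G (P3 G)} \<and>
     card {Horbit cj G (P1 G), Horbit cj G (P2 G), Horbit cj G (P3 G)} = 3"

end

theory Submission
  imports Defs
begin

text \<open>
  A minimal parabolic subgroup \<open>P = k P\<^sub>1 k\<inverse>\<close> is \<open>\<sigma>\<close>-parabolic iff \<open>k\<inverse> \<sigma>(k)\<close> lies in the
  opposite parabolic \<open>P\<^sub>1\<^sup>-\<close>, i.e. iff the hermitian matrix \<open>k\<^sup>\<dagger> J k\<close> is lower triangular, hence
  real diagonal. As \<open>J\<close> has signature (1,2), exactly one diagonal entry is positive; rescaling \<open>k\<close>
  by a real diagonal matrix and moving the positive entry to the front by a Weyl element \<open>w\<^sub>i\<close>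
  gives \<open>P = f P\<^sub>i f\<inverse>\<close> with \<open>f \<in> U(1,2) = G\<^sup>\<sigma>\<close>. Every \<open>f \<in> U(1,2)\<close> factors as \<open>h d\<close> where \<open>d\<close> is
  diagonal and \<open>h\<close> is a boost conjugated by a rotation times a rotation, each factor joined to
  the identity by a path in \<open>G\<^sup>\<sigma>\<close>, so \<open>h \<in> H\<close>. Diagonal matrices normalise every \<open>P\<^sub>i\<close>, hence \<open>P\<close> is \<open>H\<close>-conjugate
  to \<open>P\<^sub>i\<close>. The three orbits are distinct: \<open>h P\<^sub>1 h\<inverse> = P\<^sub>2\<close> or \<open>P\<^sub>3\<close> would make the first column
  of \<open>h \<in> G\<^sup>\<sigma>\<close> a \<open>J\<close>-negative vector, contradicting \<open>(h\<^sup>\<dagger> J h)\<^sub>1\<^sub>1 = 1\<close>, and \<open>h P\<^sub>2 h\<inverse> = P\<^sub>3\<close> does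
  the same to its first row.
\<close>

section \<open>Explicit 3 \<times> 3 matrices\<close>

definition mat3 :: "'a \<Rightarrow> 'a \<Rightarrow> 'a \<Rightarrow> 'a \<Rightarrow> 'a \<Rightarrow> 'a \<Rightarrow> 'a \<Rightarrow> 'a \<Rightarrow> 'a \<Rightarrow> 'a^3^3" where
  "mat3 a b c d e f g h i = (\<chi> r s. if r = 1 then (if s = 1 then a else if s = 2 then b else c)
     else if r = 2 then (if s = 1 then d else if s = 2 then e else f)
     else (if s = 1 then g else if s = 2 then h else i))"

definition diag3 :: "'a::zero \<Rightarrow> 'a \<Rightarrow> 'a \<Rightarrow> 'a^3^3" where
  "diag3 x y z = (\<chi> a b. if a = b then (if a = 1 then x else if a = 2 then y else z) else 0)"

definition transvection :: "3 \<Rightarrow> 3 \<Rightarrow> 'a::ring_1 \<Rightarrow> 'a^3^3" where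
  "transvection i j q = (\<chi> a b. if a = b then 1 else if a = i \<and> b = j then q else 0)"

definition inverse_pair :: "'a::semiring_1^'n^'n \<Rightarrow> 'a^'n^'n \<Rightarrow> bool" where
  "inverse_pair A B \<longleftrightarrow> A ** B = mat 1 \<and> B ** A = mat 1"

lemma mat3_nth [simp]:
  "mat3 a b c d e f g h i $ 1 $ 1 = a" "mat3 a b c d e f g h i $ 1 $ 2 = b"
  "mat3 a b c d e f g h i $ 1 $ 3 = c" "mat3 a b c d e f g h i $ 2 $ 1 = d"
  "mat3 a b c d e f g h i $ 2 $ 2 = e" "mat3 a b c d e f g h i $ 2 $ 3 = f"
  "mat3 a b c d e f g h i $ 3 $ 1 = g" "mat3 a b c d e f g h i $ 3 $ 2 = h"
  "mat3 a b c d e f g h i $ 3 $ 3 = i"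
  by (simp_all add: mat3_def)

lemma matrix3_eq_iff:
  "(A::'a^3^3) = B \<longleftrightarrow> A$1$1 = B$1$1 \<and> A$1$2 = B$1$2 \<and> A$1$3 = B$1$3 \<and>
     A$2$1 = B$2$1 \<and> A$2$2 = B$2$2 \<and> A$2$3 = B$2$3 \<and> A$3$1 = B$3$1 \<and> A$3$2 = B$3$2 \<and> A$3$3 = B$3$3"
  by (auto simp: vec_eq_iff forall_3)

lemma mat3_eq_iff:
  "mat3 a b c d e f g h i = mat3 a' b' c' d' e' f' g' h' i' \<longleftrightarrow>
     a = a' \<and> b = b' \<and> c = c' \<and> d = d' \<and> e = e' \<and> f = f' \<and> g = g' \<and> h = h' \<and> i = i'"
  by (simp add: matrix3_eq_iff)

lemma mat3_entries:
  "(A::'a^3^3) = mat3 (A$1$1) (A$1$2) (A$1$3) (A$2$1) (A$2$2) (A$2$3) (A$3$1) (A$3$2) (A$3$3)"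
  by (simp add: matrix3_eq_iff)

lemma matrix_mult_nth3:
  "((A::'a::semiring_1^3^3) ** B) $ i $ j = A$i$1 * B$1$j + A$i$2 * B$2$j + A$i$3 * B$3$j"
  by (simp add: matrix_matrix_mult_def sum_3)

lemma mat3_mult:
  "mat3 a b c d e f g h i ** mat3 a' b' c' d' e' f' g' h' i' =
   mat3 (a*a' + b*d' + c*g') (a*b' + b*e' + c*h') (a*c' + b*f' + c*i')
        (d*a' + e*d' + f*g') (d*b' + e*e' + f*h') (d*c' + e*f' + f*i')
        (g*a' + h*d' + i*g') (g*b' + h*e' + i*h') (g*c' + h*f' + i*i')"
  for a :: "'a::semiring_1"
  by (simp add: matrix3_eq_iff matrix_mult_nth3)

lemma mat1_mat3: "(mat 1 :: 'a::semiring_1^3^3) = mat3 1 0 0 0 1 0 0 0 1"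
  by (simp add: matrix3_eq_iff mat_def)

lemma diag3_mat3: "diag3 x y z = mat3 x 0 0 0 y 0 0 0 z"
  by (simp add: matrix3_eq_iff diag3_def)

lemma transvection_mat3:
  "transvection 1 2 q = mat3 1 q 0 0 1 0 0 0 1" "transvection 1 3 q = mat3 1 0 q 0 1 0 0 0 1"
  "transvection 2 1 q = mat3 1 0 0 q 1 0 0 0 1" "transvection 2 3 q = mat3 1 0 0 0 1 q 0 0 1"
  "transvection 3 1 q = mat3 1 0 0 0 1 0 q 0 1" "transvection 3 2 q = mat3 1 0 0 0 1 0 0 q 1"
  by (simp_all add: matrix3_eq_iff transvection_def)

lemma Jmat_mat3: "(Jmat :: 'a::ring_1^3^3) = mat3 1 0 0 0 (-1) 0 0 0 (-1)"
  by (simp add: matrix3_eq_iff Jmat_def)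

lemma Jmat_diag3: "Jmat = diag3 1 (-1) (-1)"
  by (simp add: Jmat_mat3 diag3_mat3)

lemma ctrans_mat3:
  "ctrans cj (mat3 a b c d e f g h i) = mat3 (cj a) (cj d) (cj g) (cj b) (cj e) (cj h) (cj c) (cj f) (cj i)"
  by (simp add: matrix3_eq_iff ctrans_def)

lemma diag3_mult: "diag3 a b c ** diag3 a' b' c' = diag3 (a*a') (b*b') (c*c')"
  for a :: "'a::semiring_1"
  by (simp add: diag3_mat3 mat3_mult)

lemma diag3_one: "diag3 1 1 1 = (mat 1 :: 'a::semiring_1^3^3)"
  by (simp add: diag3_mat3 mat1_mat3)

lemma inverse_pair_unique: "inverse_pair A B \<Longrightarrow> inverse_pair A C \<Longrightarrow> B = C"
  unfolding inverse_pair_def by (metis matrix_mul_assoc matrix_mul_lid matrix_mul_rid)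

lemma inverse_pair_sym: "inverse_pair A B \<Longrightarrow> inverse_pair B A"
  by (auto simp: inverse_pair_def)

lemma inverse_pair_mult:
  "inverse_pair A A' \<Longrightarrow> inverse_pair B B' \<Longrightarrow> inverse_pair (A ** B) (B' ** A')"
  unfolding inverse_pair_def by (metis matrix_mul_assoc matrix_mul_lid)

lemma inverse_pair_one: "inverse_pair (mat 1) (mat 1)"
  by (simp add: inverse_pair_def)

lemma inverse_pair_cancel:
  "inverse_pair A B \<Longrightarrow> C ** A ** B = C" "inverse_pair A B \<Longrightarrow> C ** B ** A = C"
  unfolding inverse_pair_def by (metis matrix_mul_assoc matrix_mul_rid)+

lemma minv_eqI: "inverse_pair A B \<Longrightarrow> minv A = B"
  unfolding minv_def matrix_inv_def
  by (rule some_equality) (auto simp: inverse_pair_def intro: inverse_pair_unique[unfolded inverse_pair_def])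

lemma inverse_pair_minv: "inverse_pair A B \<Longrightarrow> inverse_pair A (minv A)"
  using minv_eqI by metis

lemma minv_one: "minv (mat 1 :: 'a::ring_1^3^3) = mat 1"
  by (rule minv_eqI[OF inverse_pair_one])

lemma conjgrp_conjgrp:
  "inverse_pair A A' \<Longrightarrow> inverse_pair B B' \<Longrightarrow> conjgrp A (conjgrp B X) = conjgrp (A ** B) X"
  unfolding conjgrp_def
  using minv_eqI[of A A'] minv_eqI[of B B'] minv_eqI[OF inverse_pair_mult, of A A' B B']
  by (auto simp: image_image matrix_mul_assoc)

lemma conjgrp_one: "conjgrp (mat 1) X = X"
  by (simp add: conjgrp_def minv_one)

lemma Jmat_Jmat [simp]: "Jmat ** Jmat = (mat 1 :: 'a::ring_1^3^3)"
  by (simp add: Jmat_mat3 mat1_mat3 mat3_mult)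

lemma Jmat_Jmat_left [simp]: "Jmat ** (Jmat ** A) = (A :: 'a::ring_1^3^3)"
  by (simp add: matrix_mul_assoc)

lemma Jmat_Jmat_right [simp]: "A ** Jmat ** Jmat = (A :: 'a::ring_1^3^3)"
  by (metis Jmat_Jmat matrix_mul_assoc matrix_mul_rid)

lemma inverse_pair_Jmat: "inverse_pair Jmat (Jmat :: 'a::ring_1^3^3)"
  by (simp add: inverse_pair_def)

definition upper_triangular :: "'a::zero^3^3 \<Rightarrow> bool" where
  "upper_triangular g \<longleftrightarrow> g$2$1 = 0 \<and> g$3$1 = 0 \<and> g$3$2 = 0"

definition lower_triangular :: "'a::zero^3^3 \<Rightarrow> bool" where
  "lower_triangular g \<longleftrightarrow> g$1$2 = 0 \<and> g$1$3 = 0 \<and> g$2$3 = 0"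

lemma upper_triangular_mult:
  "upper_triangular a \<Longrightarrow> upper_triangular b \<Longrightarrow> upper_triangular (a ** b)" for a :: "'a::semiring_1^3^3"
  by (simp add: upper_triangular_def matrix_mult_nth3)

lemma lower_triangular_mult:
  "lower_triangular a \<Longrightarrow> lower_triangular b \<Longrightarrow> lower_triangular (a ** b)" for a :: "'a::semiring_1^3^3"
  by (simp add: lower_triangular_def matrix_mult_nth3)

lemma conjgrp_eq_imp_minv_mult_normalises:
  assumes "inverse_pair b b'" "inverse_pair a a'" "conjgrp a X = conjgrp b X"
  shows "conjgrp (minv b ** a) X = X"
proof -
  have ib: "inverse_pair (minv b) b" using assms(1) by (metis inverse_pair_minv inverse_pair_sym)
  have "conjgrp (minv b ** a) X = conjgrp (minv b) (conjgrp a X)"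
    using conjgrp_conjgrp[OF ib assms(2)] by simp
  also have "\<dots> = conjgrp (minv b ** b) X" using conjgrp_conjgrp[OF ib assms(1)] assms(3) by simp
  also have "\<dots> = X" using ib by (simp add: inverse_pair_def conjgrp_one)
  finally show ?thesis .
qed

lemma conjgrp_mult_inverse:
  "inverse_pair f f' \<Longrightarrow> inverse_pair w w' \<Longrightarrow> conjgrp (f ** w') (conjgrp w X) = conjgrp f X"
  using conjgrp_conjgrp[OF inverse_pair_mult[OF _ inverse_pair_sym]] inverse_pair_cancel(2)
  by metis

lemma inverse_mult_same_column:
  fixes B :: "'a::semiring_1^3^3"
  assumes "inverse_pair B B'" "\<And>i. F$i$j = B$i$j"
  shows "(B' ** F)$i$j = mat 1 $i$j"
proof -
  have "(B' ** F)$i$j = (B' ** B)$i$j" using assms(2) by (simp add: matrix_mult_nth3)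
  then show ?thesis using assms(1) by (simp add: inverse_pair_def)
qed

lemma continuous_on_mat3 [continuous_intros]:
  "continuous_on S a \<Longrightarrow> continuous_on S b \<Longrightarrow> continuous_on S c \<Longrightarrow>
   continuous_on S d \<Longrightarrow> continuous_on S e \<Longrightarrow> continuous_on S f \<Longrightarrow>
   continuous_on S g \<Longrightarrow> continuous_on S h \<Longrightarrow> continuous_on S i \<Longrightarrow>
   continuous_on S (\<lambda>x. mat3 (a x) (b x) (c x) (d x) (e x) (f x) (g x) (h x) (i x))"
  for a b c d e f g h i :: "'b::topological_space \<Rightarrow> 'a::topological_space"
  unfolding mat3_def continuous_on_def by (auto intro!: tendsto_vec_lambda)

section \<open>Real division algebras with involution\<close>

text \<open>Models \<open>\<real>\<close>, \<open>\<complex>\<close> and \<open>\<bbbH>\<close>; \<open>nrm x\<close> is the squared norm \<open>|x|\<^sup>2\<close>.\<close>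

locale star_division_algebra =
  fixes cj :: "'a::{ring_1,topological_space} \<Rightarrow> 'a"
    and rl :: "real \<Rightarrow> 'a"
    and nrm :: "'a \<Rightarrow> real"
  assumes cj_add: "cj (x + y) = cj x + cj y"
    and cj_mult: "cj (x * y) = cj y * cj x"
    and cj_cj [simp]: "cj (cj x) = x"
    and cj_rl [simp]: "cj (rl r) = rl r"
    and rl_add: "rl (r + s) = rl r + rl s"
    and rl_mult: "rl (r * s) = rl r * rl s"
    and rl_one [simp]: "rl 1 = 1"
    and rl_inj: "rl r = rl s \<Longrightarrow> r = s"
    and rl_central: "rl r * x = x * rl r"
    and cj_mult_self: "cj x * x = rl (nrm x)"
    and mult_cj_self: "x * cj x = rl (nrm x)"
    and nrm_nonneg [simp]: "0 \<le> nrm x"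
    and nrm_eq_0D: "nrm x = 0 \<Longrightarrow> x = 0"
    and cj_fixed_real: "cj x = x \<Longrightarrow> \<exists>r. x = rl r"
    and continuous_mult: "continuous_on UNIV (\<lambda>p::'a \<times> 'a. fst p * snd p)"
    and continuous_add: "continuous_on UNIV (\<lambda>p::'a \<times> 'a. fst p + snd p)"
    and continuous_cj: "continuous_on UNIV cj"
    and continuous_rl: "continuous_on UNIV rl"
begin

lemma rl_zero [simp]: "rl 0 = 0"
  using rl_add[of 0 0] by simp

lemma rl_minus: "rl (- r) = - rl r"
  by (metis minus_unique rl_add add.right_inverse rl_zero)

lemma rl_minus_one [simp]: "rl (-1) = -1"
  by (simp add: rl_minus)

lemma rl_diff: "rl (r - s) = rl r - rl s"
  using rl_add[of r "-s"] rl_minus by simp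

lemma rl_eq_0_iff: "rl r = 0 \<longleftrightarrow> r = 0"
  using rl_inj[of r 0] by auto

lemma rl_inverse: "r \<noteq> 0 \<Longrightarrow> rl r * rl (1 / r) = 1" "r \<noteq> 0 \<Longrightarrow> rl (1 / r) * rl r = 1"
  by (simp_all add: rl_mult[symmetric])

lemma rl_sgn: "r \<noteq> 0 \<Longrightarrow> rl (sgn r) = (if 0 < r then 1 else -1)"
  by (simp add: sgn_if rl_minus)

lemma cj_zero [simp]: "cj 0 = 0"
  using cj_add[of 0 0] by simp

lemma cj_one [simp]: "cj 1 = 1"
  using cj_rl[of 1] by simp

lemma cj_minus: "cj (- x) = - cj x"
  by (metis minus_unique cj_add add.right_inverse cj_zero)

lemma ctrans_diag3: "ctrans cj (diag3 a b c) = diag3 (cj a) (cj b) (cj c)"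
  by (simp add: diag3_mat3 ctrans_mat3)

lemma cj_eq_0_iff [simp]: "cj x = 0 \<longleftrightarrow> x = 0"
  by (metis cj_cj cj_zero)

lemma nrm_zero [simp]: "nrm 0 = 0"
  using cj_mult_self[of 0] rl_eq_0_iff by simp

lemma nrm_eq_0_iff [simp]: "nrm x = 0 \<longleftrightarrow> x = 0"
  using nrm_eq_0D by auto

lemma nrm_pos: "x \<noteq> 0 \<Longrightarrow> 0 < nrm x"
  using nrm_nonneg[of x] nrm_eq_0_iff[of x] by linarith

lemma nrm_rl: "nrm (rl r) = r * r"
  using cj_mult_self[of "rl r"] rl_mult[of r r] by (auto dest: rl_inj)

lemma nrm_mult: "nrm (x * y) = nrm x * nrm y"
proof -
  have "rl (nrm (x * y)) = cj y * (cj x * x) * y"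
    by (simp add: cj_mult_self[symmetric] cj_mult mult.assoc)
  also have "\<dots> = rl (nrm x) * (cj y * y)"
    by (metis cj_mult_self rl_central mult.assoc)
  also have "\<dots> = rl (nrm x * nrm y)"
    by (simp add: cj_mult_self rl_mult)
  finally show ?thesis by (rule rl_inj)
qed

lemma nrm_cj: "nrm (cj x) = nrm x"
  using cj_mult_self[of "cj x"] mult_cj_self[of x] by (auto dest: rl_inj)

lemma cj_rl_mult_self: "cj u * rl r * u = rl (r * nrm u)"
  by (metis mult.assoc cj_mult_self rl_central rl_mult)

lemma neg_cj_mult_self_neq_one: "- (cj x * x) \<noteq> 1" "- (x * cj x) \<noteq> 1"
proof -
  have "rl (- nrm x) \<noteq> rl 1"
    using rl_inj[of "- nrm x" 1] nrm_nonneg[of x] by linarith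
  then show "- (cj x * x) \<noteq> 1" "- (x * cj x) \<noteq> 1"
    by (simp_all add: cj_mult_self mult_cj_self rl_minus)
qed

definition dinv :: "'a \<Rightarrow> 'a" where
  "dinv x = cj x * rl (1 / nrm x)"

lemma right_dinv: "x \<noteq> 0 \<Longrightarrow> x * dinv x = 1"
  unfolding dinv_def by (simp add: mult.assoc[symmetric] mult_cj_self rl_mult[symmetric])

lemma left_dinv: "x \<noteq> 0 \<Longrightarrow> dinv x * x = 1"
proof -
  assume "x \<noteq> 0"
  have "dinv x * x = rl (1 / nrm x) * (cj x * x)"
    unfolding dinv_def by (metis rl_central mult.assoc)
  also have "\<dots> = 1"
    using \<open>x \<noteq> 0\<close> by (simp add: cj_mult_self rl_mult[symmetric])
  finally show ?thesis .
qed

lemma scalar_one_neq_zero: "(1::'a) \<noteq> 0"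
  using rl_eq_0_iff[of 1] by simp

lemma dinv_nonzero: "x \<noteq> 0 \<Longrightarrow> dinv x \<noteq> 0"
  using right_dinv[of x] scalar_one_neq_zero by auto

lemma scalar_mult_eq_0_iff [simp]: "(x::'a) * y = 0 \<longleftrightarrow> x = 0 \<or> y = 0"
proof
  assume e: "x * y = 0"
  show "x = 0 \<or> y = 0"
  proof (cases "x = 0")
    case False
    have "y = (dinv x * x) * y" using left_dinv[OF False] by simp
    also have "\<dots> = 0" by (simp only: mult.assoc e mult_zero_right)
    finally show ?thesis by simp
  qed simp
qed auto

lemma scalar_cancel_col: "(b::'a) = b * l \<Longrightarrow> a + b = a * l \<Longrightarrow> b = 0"
proof -
  assume 1: "b = b * l" and 2: "a + b = a * l"
  have "b * (l - 1) = 0" using 1 by (simp add: algebra_simps)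
  then show "b = 0" using 2 by auto
qed

lemma scalar_cancel_row: "(b::'a) = m * b \<Longrightarrow> c + b = m * c \<Longrightarrow> b = 0"
proof -
  assume 1: "b = m * b" and 2: "c + b = m * c"
  have "(m - 1) * b = 0" using 1 by (simp add: algebra_simps)
  then show "b = 0" using 2 by auto
qed

lemma unit_factor_exists: "\<exists>l. a * l = rl (sqrt (nrm a)) \<and> nrm l = 1"
proof (cases "a = 0")
  case True
  then show ?thesis by (intro exI[of _ 1]) (simp add: nrm_rl[of 1, simplified])
next
  case False
  let ?l = "dinv a * rl (sqrt (nrm a))"
  have "a * ?l = rl (sqrt (nrm a))"
    by (simp add: mult.assoc[symmetric] right_dinv[OF False])
  moreover have "nrm a * nrm (dinv a) = 1"
    using right_dinv[OF False] nrm_mult[of a "dinv a"] nrm_rl[of 1] by simp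
  then have "nrm ?l = 1"
    using nrm_pos[OF False] by (simp add: nrm_mult nrm_rl mult.commute)
  ultimately show ?thesis by blast
qed

lemma exists_nontrivial_solution2: "\<exists>\<alpha> \<beta>::'a. a * \<alpha> + b * \<beta> = 0 \<and> (\<alpha> \<noteq> 0 \<or> \<beta> \<noteq> 0)"
proof (cases "b = 0")
  case True
  then show ?thesis by (intro exI[of _ 0] exI[of _ 1]) (simp add: scalar_one_neq_zero)
next
  case False
  have "a * 1 + b * (- (dinv b * a)) = 0"
    by (simp add: mult.assoc[symmetric] right_dinv[OF False])
  then show ?thesis by (intro exI[of _ 1] exI[of _ "- (dinv b * a)"]) (simp add: scalar_one_neq_zero)
qed

lemma polar_pair:
  obtains u2 u3 where "y2 = u2 * rl (sqrt (nrm y2 + nrm y3))" "y3 = u3 * rl (sqrt (nrm y2 + nrm y3))"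
    "nrm u2 + nrm u3 = 1"
proof (cases "nrm y2 + nrm y3 = 0")
  case True
  then have "y2 = 0" "y3 = 0" using nrm_nonneg[of y2] nrm_nonneg[of y3] by (simp_all add: add_nonneg_eq_0_iff)
  then show ?thesis using that[of 1 0] True by (simp add: nrm_rl[of 1, simplified])
next
  case False
  define s where "s = sqrt (nrm y2 + nrm y3)"
  have s: "s \<noteq> 0" "s * s = nrm y2 + nrm y3" using False unfolding s_def by (simp_all add: add_nonneg_nonneg)
  have "nrm (y2 * rl (1/s)) + nrm (y3 * rl (1/s)) = (nrm y2 + nrm y3) * (1/s * (1/s))"
    by (simp add: nrm_mult nrm_rl add_divide_distrib)
  also have "\<dots> = 1" using s False by (simp add: field_simps)
  finally show ?thesis
    using that[of "y2 * rl (1/s)" "y3 * rl (1/s)"] s(1) by (simp add: mult.assoc rl_inverse s_def)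
qed

lemma continuous_on_scalar_mult [continuous_intros]:
  "continuous_on S f \<Longrightarrow> continuous_on S g \<Longrightarrow> continuous_on S (\<lambda>x. f x * g x)"
  for f g :: "'b::topological_space \<Rightarrow> 'a"
  using continuous_on_compose2[OF continuous_mult continuous_on_Pair, of S f g] by simp

lemma continuous_on_scalar_add [continuous_intros]:
  "continuous_on S f \<Longrightarrow> continuous_on S g \<Longrightarrow> continuous_on S (\<lambda>x. f x + g x)"
  for f g :: "'b::topological_space \<Rightarrow> 'a"
  using continuous_on_compose2[OF continuous_add continuous_on_Pair, of S f g] by simp

lemma continuous_on_cj [continuous_intros]:
  "continuous_on S f \<Longrightarrow> continuous_on S (\<lambda>x. cj (f x))"
  for f :: "'b::topological_space \<Rightarrow> 'a"
  by (rule continuous_on_compose2[OF continuous_cj]) auto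

lemma continuous_on_rl [continuous_intros]:
  "continuous_on S f \<Longrightarrow> continuous_on S (\<lambda>x. rl (f x))"
  for f :: "'b::topological_space \<Rightarrow> real"
  by (rule continuous_on_compose2[OF continuous_rl]) auto

lemma continuous_on_scalar_minus [continuous_intros]:
  "continuous_on S f \<Longrightarrow> continuous_on S (\<lambda>x. - f x)"
  for f :: "'b::topological_space \<Rightarrow> 'a"
proof -
  assume "continuous_on S f"
  then have "continuous_on S (\<lambda>x. rl (-1) * f x)"
    by (intro continuous_on_scalar_mult continuous_on_const)
  then show ?thesis by simp
qed

lemma continuous_on_matrix_mult [continuous_intros]:
  "continuous_on S A \<Longrightarrow> continuous_on S B \<Longrightarrow> continuous_on S (\<lambda>x. A x ** B x)"
  for A B :: "'b::topological_space \<Rightarrow> 'a^3^3"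
proof -
  assume A: "continuous_on S A" and B: "continuous_on S B"
  have entry: "continuous_on S (\<lambda>x. M x $ i $ j)" if "continuous_on S M" for M :: "'b \<Rightarrow> 'a^3^3" and i j
    using that unfolding continuous_on_def by (auto intro!: tendsto_vec_nth)
  have e: "(\<lambda>x. A x ** B x) = (\<lambda>x. \<chi> i j. A x$i$1 * B x$1$j + A x$i$2 * B x$2$j + A x$i$3 * B x$3$j)"
    by (rule ext) (simp add: vec_eq_iff matrix_mult_nth3)
  show ?thesis
    unfolding e continuous_on_def
    by (intro ballI tendsto_vec_lambda continuous_on_def[THEN iffD1, rule_format] continuous_intros entry A B)
qed

subsection \<open>Conjugate transpose and the unitary group \<open>U(1,2)\<close> of the form \<open>J\<close>\<close>

lemma ctrans_mult: "ctrans cj (A ** B) = ctrans cj B ** ctrans cj A"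
  by (simp add: matrix3_eq_iff ctrans_def matrix_mult_nth3 cj_add cj_mult)

lemma ctrans_ctrans [simp]: "ctrans cj (ctrans cj A) = A"
  by (simp add: vec_eq_iff ctrans_def)

lemma ctrans_one [simp]: "ctrans cj (mat 1) = mat 1"
  by (simp add: vec_eq_iff ctrans_def mat_def)

lemma ctrans_Jmat [simp]: "ctrans cj Jmat = Jmat"
  by (simp add: matrix3_eq_iff ctrans_def Jmat_def cj_minus)

lemma inverse_pair_ctrans: "inverse_pair A B \<Longrightarrow> inverse_pair (ctrans cj A) (ctrans cj B)"
  unfolding inverse_pair_def by (metis ctrans_mult ctrans_one)

definition J_unitary :: "'a^3^3 \<Rightarrow> bool" where
  "J_unitary g \<longleftrightarrow> ctrans cj g ** Jmat ** g = Jmat"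

lemma J_unitary_inverse: "inverse_pair g g' \<Longrightarrow> J_unitary g \<Longrightarrow> g' = Jmat ** ctrans cj g ** Jmat"
proof -
  assume i: "inverse_pair g g'" and u: "J_unitary g"
  have "Jmat ** ctrans cj g ** Jmat ** g = mat 1"
    using u unfolding J_unitary_def by (metis Jmat_Jmat matrix_mul_assoc)
  then have "Jmat ** ctrans cj g ** Jmat ** g ** g' = g'" by simp
  then show ?thesis
    using i unfolding inverse_pair_def by (metis matrix_mul_assoc matrix_mul_rid)
qed

lemma J_unitary_right:
  assumes "inverse_pair g g'" "J_unitary g"
  shows "g ** Jmat ** ctrans cj g = Jmat"
proof -
  have "g ** (Jmat ** ctrans cj g ** Jmat) = mat 1"
    using J_unitary_inverse[OF assms] assms(1) by (simp add: inverse_pair_def)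
  then have "g ** Jmat ** ctrans cj g ** Jmat ** Jmat = Jmat" by (simp add: matrix_mul_assoc)
  then show ?thesis by (simp add: matrix_mul_assoc)
qed

lemma J_unitary_mult: "J_unitary a \<Longrightarrow> J_unitary b \<Longrightarrow> J_unitary (a ** b)"
  unfolding J_unitary_def by (simp add: ctrans_mult matrix_mul_assoc) (metis matrix_mul_assoc)

lemma J_unitary_ctrans: "inverse_pair g g' \<Longrightarrow> J_unitary g \<Longrightarrow> J_unitary (ctrans cj g)"
  using J_unitary_right unfolding J_unitary_def by (simp add: matrix_mul_assoc)

lemma J_unitary_diag3:
  "nrm l = 1 \<Longrightarrow> J_unitary (diag3 l 1 1)" "nrm l = 1 \<Longrightarrow> J_unitary (diag3 1 l 1)"
  by (simp_all add: J_unitary_def ctrans_diag3 diag3_mult Jmat_diag3 cj_mult_self)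

lemma inverse_pair_unit_diag3:
  "nrm l = 1 \<Longrightarrow> inverse_pair (diag3 l 1 1) (diag3 (cj l) 1 1)"
  "nrm l = 1 \<Longrightarrow> inverse_pair (diag3 1 l 1) (diag3 1 (cj l) 1)"
  by (simp_all add: inverse_pair_def diag3_mult cj_mult_self mult_cj_self diag3_one)

lemma J_unitary_entry:
  assumes "J_unitary M"
  shows "cj (M$1$i) * M$1$j - cj (M$2$i) * M$2$j - cj (M$3$i) * M$3$j = Jmat$i$j"
proof -
  have "(ctrans cj M ** Jmat ** M)$i$j = Jmat$i$j" using assms unfolding J_unitary_def by simp
  then show ?thesis by (simp add: matrix_mult_nth3 ctrans_def Jmat_def algebra_simps)
qed

lemma J_unitary_right_entry:
  assumes "inverse_pair g g'" "J_unitary g"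
  shows "g$i$1 * cj (g$j$1) - g$i$2 * cj (g$j$2) - g$i$3 * cj (g$j$3) = Jmat$i$j"
proof -
  have "(g ** Jmat ** ctrans cj g)$i$j = Jmat$i$j" using J_unitary_right[OF assms] by simp
  then show ?thesis by (simp add: matrix_mult_nth3 ctrans_def Jmat_def algebra_simps)
qed

lemma upper_triangular_ctrans: "upper_triangular (ctrans cj a) \<longleftrightarrow> lower_triangular a"
  by (auto simp: upper_triangular_def lower_triangular_def ctrans_def)

lemma lower_triangular_ctrans: "lower_triangular (ctrans cj a) \<longleftrightarrow> upper_triangular a"
  by (auto simp: upper_triangular_def lower_triangular_def ctrans_def)

lemma upper_triangular_inverse:
  fixes g :: "'a^3^3"
  assumes i: "inverse_pair g g'" and u: "upper_triangular g"
  shows "upper_triangular g'"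
proof -
  have e: "g' ** g = mat 1" using i by (simp add: inverse_pair_def)
  have e11: "g'$1$1 * g$1$1 = 1" and e21: "g'$2$1 * g$1$1 = 0" and e31: "g'$3$1 * g$1$1 = 0"
    and e22: "g'$2$1 * g$1$2 + g'$2$2 * g$2$2 = 1" and e32: "g'$3$1 * g$1$2 + g'$3$2 * g$2$2 = 0"
    using arg_cong[OF e, of "\<lambda>m. m$1$1"] arg_cong[OF e, of "\<lambda>m. m$2$1"] arg_cong[OF e, of "\<lambda>m. m$3$1"]
      arg_cong[OF e, of "\<lambda>m. m$2$2"] arg_cong[OF e, of "\<lambda>m. m$3$2"] u
    by (simp_all add: matrix_mult_nth3 mat_def upper_triangular_def)
  have "g$1$1 \<noteq> 0" using e11 scalar_one_neq_zero by auto
  then have "g'$2$1 = 0" "g'$3$1 = 0" using e21 e31 by auto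
  moreover from this have "g$2$2 \<noteq> 0" using e22 scalar_one_neq_zero by auto
  ultimately show ?thesis using e32 by (simp add: upper_triangular_def)
qed

lemma lower_triangular_inverse:
  "inverse_pair g g' \<Longrightarrow> lower_triangular g \<Longrightarrow> lower_triangular g'" for g :: "'a^3^3"
  using upper_triangular_inverse[OF inverse_pair_ctrans] by (simp add: upper_triangular_ctrans)

definition diag3_inv :: "'a \<Rightarrow> 'a \<Rightarrow> 'a \<Rightarrow> 'a^3^3" where
  "diag3_inv x y z = diag3 (dinv x) (dinv y) (dinv z)"

lemma inverse_pair_diag3:
  "x \<noteq> 0 \<Longrightarrow> y \<noteq> 0 \<Longrightarrow> z \<noteq> 0 \<Longrightarrow> inverse_pair (diag3 x y z) (diag3_inv x y z)"
  by (simp add: inverse_pair_def diag3_inv_def diag3_mult diag3_one left_dinv right_dinv)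

lemma hermitian_lower_triangular_diag3:
  assumes h: "ctrans cj Y = Y" and l: "lower_triangular Y"
  obtains r1 r2 r3 where "Y = diag3 (rl r1) (rl r2) (rl r3)"
proof -
  have entry: "cj (Y$j$i) = Y$i$j" for i j using arg_cong[OF h, of "\<lambda>M. M$i$j"] by (simp add: ctrans_def)
  obtain r1 r2 r3 where "Y$1$1 = rl r1" "Y$2$2 = rl r2" "Y$3$3 = rl r3"
    using cj_fixed_real entry[of 1 1] entry[of 2 2] entry[of 3 3] by metis
  moreover have "Y = diag3 (Y$1$1) (Y$2$2) (Y$3$3)"
    using l entry[of 1 2] entry[of 1 3] entry[of 2 3]
    by (subst mat3_entries) (simp add: diag3_mat3 lower_triangular_def mat3_eq_iff)
  ultimately show ?thesis using that by simp
qed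

text \<open>Sylvester's law of inertia for the form \<open>k\<^sup>\<dagger> J k\<close>, which is congruent to \<open>J\<close> of signature (1,2).\<close>

lemma J_form_nonpos_on_row1_kernel:
  assumes D: "ctrans cj k ** Jmat ** k = diag3 (rl r1) (rl r2) (rl r3)"
    and v: "k$1$1 * u1 + k$1$2 * u2 + k$1$3 * u3 = 0"
  shows "r1 * nrm u1 + r2 * nrm u2 + r3 * nrm u3 \<le> 0"
proof -
  let ?U = "mat3 u1 0 0 u2 0 0 u3 0 0"
  define v2 where "v2 = (k ** ?U)$2$1"
  define v3 where "v3 = (k ** ?U)$3$1"
  have "(ctrans cj (k ** ?U) ** Jmat ** (k ** ?U))$1$1 = - (cj v2 * v2) - cj v3 * v3"
    by (simp add: matrix_mult_nth3 ctrans_def Jmat_def v v2_def v3_def)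
  also have "\<dots> = rl (- (nrm v2 + nrm v3))" by (simp add: cj_mult_self rl_diff rl_minus)
  finally have 1: "(ctrans cj (k ** ?U) ** Jmat ** (k ** ?U))$1$1 = rl (- (nrm v2 + nrm v3))" .
  have "ctrans cj (k ** ?U) ** Jmat ** (k ** ?U) = ctrans cj ?U ** (ctrans cj k ** Jmat ** k) ** ?U"
    by (simp add: ctrans_mult matrix_mul_assoc)
  also have "\<dots> $1$1 = cj u1 * rl r1 * u1 + cj u2 * rl r2 * u2 + cj u3 * rl r3 * u3"
    unfolding D by (simp add: ctrans_mat3 diag3_mat3 mat3_mult)
  also have "\<dots> = rl (r1 * nrm u1 + r2 * nrm u2 + r3 * nrm u3)" by (simp add: cj_rl_mult_self rl_add)
  finally have "- (nrm v2 + nrm v3) = r1 * nrm u1 + r2 * nrm u2 + r3 * nrm u3"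
    using 1 by (auto intro: rl_inj)
  moreover have "0 \<le> nrm v2 + nrm v3" by simp
  ultimately show ?thesis by linarith
qed

lemma J_form_has_positive_entry:
  assumes D: "ctrans cj k ** Jmat ** k = diag3 (rl r1) (rl r2) (rl r3)" and i: "inverse_pair k k'"
  shows "0 < r1 \<or> 0 < r2 \<or> 0 < r3"
proof -
  have "ctrans cj k' ** (ctrans cj k ** Jmat ** k) ** k' = Jmat"
    using i inverse_pair_ctrans[OF i] unfolding inverse_pair_def
    by (metis matrix_mul_assoc matrix_mul_lid matrix_mul_rid)
  then have "(ctrans cj k' ** diag3 (rl r1) (rl r2) (rl r3) ** k')$1$1 = 1"
    unfolding D by (simp add: Jmat_def)
  then have "rl (r1 * nrm (k'$1$1) + r2 * nrm (k'$2$1) + r3 * nrm (k'$3$1)) = rl 1"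
    by (simp add: matrix_mult_nth3 ctrans_def diag3_def cj_rl_mult_self rl_add)
  then have e: "r1 * nrm (k'$1$1) + r2 * nrm (k'$2$1) + r3 * nrm (k'$3$1) = 1" by (rule rl_inj)
  show ?thesis
  proof (rule ccontr)
    assume "\<not> ?thesis"
    then have "r1 * nrm (k'$1$1) \<le> 0" "r2 * nrm (k'$2$1) \<le> 0" "r3 * nrm (k'$3$1) \<le> 0"
      by (simp_all add: mult_nonpos_nonneg)
    then show False using e by linarith
  qed
qed

lemma J_form_not_two_positive:
  assumes D: "ctrans cj k ** Jmat ** k = diag3 (rl r1) (rl r2) (rl r3)"
  shows "\<not> (0 < r1 \<and> 0 < r2)" "\<not> (0 < r1 \<and> 0 < r3)" "\<not> (0 < r2 \<and> 0 < r3)"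
proof -
  have pos: "0 < ra * nrm \<alpha> + rb * nrm \<beta>" if "0 < ra" "0 < rb" "\<alpha> \<noteq> 0 \<or> \<beta> \<noteq> 0" for ra rb and \<alpha> \<beta> :: 'a
    using that nrm_pos[of \<alpha>] nrm_pos[of \<beta>] nrm_nonneg[of \<alpha>] nrm_nonneg[of \<beta>]
    by (auto intro: add_pos_nonneg add_nonneg_pos)
  obtain a b :: 'a where ab: "k$1$1 * a + k$1$2 * b = 0" "a \<noteq> 0 \<or> b \<noteq> 0" using exists_nontrivial_solution2 by blast
  have "r1 * nrm a + r2 * nrm b + r3 * nrm 0 \<le> 0" using J_form_nonpos_on_row1_kernel[OF D, of a b 0] ab by simp
  then show "\<not> (0 < r1 \<and> 0 < r2)" using pos[of r1 r2 a b] ab by auto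
  obtain a b :: 'a where ab: "k$1$1 * a + k$1$3 * b = 0" "a \<noteq> 0 \<or> b \<noteq> 0" using exists_nontrivial_solution2 by blast
  have "r1 * nrm a + r2 * nrm 0 + r3 * nrm b \<le> 0" using J_form_nonpos_on_row1_kernel[OF D, of a 0 b] ab by simp
  then show "\<not> (0 < r1 \<and> 0 < r3)" using pos[of r1 r3 a b] ab by auto
  obtain a b :: 'a where ab: "k$1$2 * a + k$1$3 * b = 0" "a \<noteq> 0 \<or> b \<noteq> 0" using exists_nontrivial_solution2 by blast
  have "r1 * nrm 0 + r2 * nrm a + r3 * nrm b \<le> 0" using J_form_nonpos_on_row1_kernel[OF D, of 0 a b] ab by simp
  then show "\<not> (0 < r2 \<and> 0 < r3)" using pos[of r2 r3 a b] ab by auto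
qed

lemma J_form_normalise:
  assumes D: "ctrans cj k ** Jmat ** k = diag3 (rl r1) (rl r2) (rl r3)"
    and nz: "r1 \<noteq> 0" "r2 \<noteq> 0" "r3 \<noteq> 0"
  defines "S \<equiv> diag3 (rl (1 / sqrt \<bar>r1\<bar>)) (rl (1 / sqrt \<bar>r2\<bar>)) (rl (1 / sqrt \<bar>r3\<bar>))"
  shows "ctrans cj (k ** S) ** Jmat ** (k ** S) = diag3 (rl (sgn r1)) (rl (sgn r2)) (rl (sgn r3))"
proof -
  have scale: "(1 / sqrt \<bar>r\<bar>) * r * (1 / sqrt \<bar>r\<bar>) = sgn r" if "r \<noteq> 0" for r :: real
  proof -
    have "(1 / sqrt \<bar>r\<bar>) * r * (1 / sqrt \<bar>r\<bar>) = r / \<bar>r\<bar>"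
      using real_sqrt_mult_self[of "\<bar>r\<bar>"] by (simp add: field_simps)
    then show ?thesis using that by (simp add: sgn_if)
  qed
  have "ctrans cj (k ** S) ** Jmat ** (k ** S) = S ** (ctrans cj k ** Jmat ** k) ** S"
    by (simp add: ctrans_mult matrix_mul_assoc S_def ctrans_diag3)
  also have "\<dots> = diag3 (rl (1 / sqrt \<bar>r1\<bar> * r1 * (1 / sqrt \<bar>r1\<bar>)))
      (rl (1 / sqrt \<bar>r2\<bar> * r2 * (1 / sqrt \<bar>r2\<bar>))) (rl (1 / sqrt \<bar>r3\<bar> * r3 * (1 / sqrt \<bar>r3\<bar>)))"
    unfolding D S_def diag3_mult by (simp only: rl_mult)
  finally show ?thesis by (simp only: scale[OF nz(1)] scale[OF nz(2)] scale[OF nz(3)])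
qed

text \<open>The hyperbolic rotation of the \<open>(e\<^sub>1, e\<^sub>2)\<close>-plane with \<open>sinh t = s\<close>.\<close>

definition boost :: "real \<Rightarrow> 'a^3^3" where
  "boost s = mat3 (rl (sqrt (1 + s\<^sup>2))) (rl s) 0 (rl s) (rl (sqrt (1 + s\<^sup>2))) 0 0 0 1"

lemma boost_J_unitary: "J_unitary (boost s)"
proof -
  have cc: "sqrt (1 + s\<^sup>2) * sqrt (1 + s\<^sup>2) = 1 + s\<^sup>2" by (simp add: add_nonneg_nonneg)
  have "rl (sqrt (1 + s\<^sup>2)) * rl (sqrt (1 + s\<^sup>2)) - rl s * rl s = 1"
    by (simp add: rl_mult[symmetric] rl_diff[symmetric] cc power2_eq_square)
  moreover have "rl s * rl s - rl (sqrt (1 + s\<^sup>2)) * rl (sqrt (1 + s\<^sup>2)) = -1"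
    by (simp add: rl_mult[symmetric] rl_diff[symmetric] cc rl_minus[symmetric] power2_eq_square del: rl_one)
  moreover have "rl s * rl (sqrt (1 + s\<^sup>2)) = rl (sqrt (1 + s\<^sup>2)) * rl s" by (rule rl_central)
  ultimately show ?thesis
    unfolding J_unitary_def boost_def by (simp add: ctrans_mat3 Jmat_mat3 mat3_mult)
qed

text \<open>The rotation of the \<open>(e\<^sub>2, e\<^sub>3)\<close>-plane with cosine \<open>sqrt (1 - |b|\<^sup>2)\<close> and sine \<open>b\<close>; \<open>|b| \<le> 1\<close> is required.\<close>

definition rotation :: "'a \<Rightarrow> 'a^3^3" where
  "rotation b = mat3 1 0 0 0 (rl (sqrt (1 - nrm b))) (- cj b) 0 b (rl (sqrt (1 - nrm b)))"

lemma rotation_cos_sin: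
  assumes "nrm b \<le> 1"
  shows "rl (sqrt (1 - nrm b)) * rl (sqrt (1 - nrm b)) + cj b * b = 1"
    "b * cj b + rl (sqrt (1 - nrm b)) * rl (sqrt (1 - nrm b)) = 1"
  using assms by (simp_all add: rl_mult[symmetric] cj_mult_self mult_cj_self rl_diff)

lemma inverse_pair_rotation:
  assumes "nrm b \<le> 1"
  shows "inverse_pair (rotation b) (ctrans cj (rotation b))"
proof -
  have "rl (sqrt (1 - nrm b)) * cj b = cj b * rl (sqrt (1 - nrm b))"
    "rl (sqrt (1 - nrm b)) * b = b * rl (sqrt (1 - nrm b))" by (simp_all add: rl_central)
  then show ?thesis
    unfolding inverse_pair_def rotation_def
    by (simp add: ctrans_mat3 mat3_mult mat1_mat3 cj_minus rotation_cos_sin[OF assms])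
qed

lemma rotation_J_unitary:
  assumes "nrm b \<le> 1"
  shows "J_unitary (rotation b)"
proof -
  have "rl (sqrt (1 - nrm b)) * cj b = cj b * rl (sqrt (1 - nrm b))"
    "rl (sqrt (1 - nrm b)) * b = b * rl (sqrt (1 - nrm b))" by (simp_all add: rl_central)
  moreover have "- (rl (sqrt (1 - nrm b)) * rl (sqrt (1 - nrm b))) - cj b * b = -1"
    "- (b * cj b) - rl (sqrt (1 - nrm b)) * rl (sqrt (1 - nrm b)) = -1"
    using rotation_cos_sin[OF assms]
    by (simp_all add: algebra_simps eq_neg_iff_add_eq_0 diff_conv_add_uminus[symmetric])
  ultimately show ?thesis
    unfolding J_unitary_def rotation_def by (simp add: ctrans_mat3 mat3_mult Jmat_mat3 cj_minus)
qed

lemma unit_vector_rotation_column: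
  assumes "nrm u2 + nrm u3 = 1"
  obtains m where "nrm m = 1" "nrm (u3 * m) \<le> 1" "rl (sqrt (1 - nrm (u3 * m))) = u2 * m"
proof -
  obtain m where m: "u2 * m = rl (sqrt (nrm u2))" "nrm m = 1" using unit_factor_exists by blast
  moreover have "1 - nrm (u3 * m) = nrm u2" using m(2) assms by (simp add: nrm_mult)
  ultimately show ?thesis using that[of m] nrm_nonneg[of u2] by simp
qed

end

section \<open>The group \<open>G\<close> and the involution \<open>\<sigma>\<close>\<close>

locale sl3_group = star_division_algebra cj rl nrm
  for cj :: "'a::{ring_1,topological_space} \<Rightarrow> 'a" and rl nrm +
  fixes G :: "('a^3^3) set"
  assumes G_inverse_pair: "g \<in> G \<Longrightarrow> inverse_pair g (minv g)"
    and G_mult: "g \<in> G \<Longrightarrow> h \<in> G \<Longrightarrow> g ** h \<in> G"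
    and G_minv: "g \<in> G \<Longrightarrow> minv g \<in> G"
    and G_conj: "g \<in> G \<Longrightarrow> inverse_pair a b \<Longrightarrow> a ** g ** b \<in> G"
    and G_ctrans: "g \<in> G \<Longrightarrow> ctrans cj g \<in> G"
    and G_transvection: "i \<noteq> j \<Longrightarrow> transvection i j q \<in> G"
begin

lemma G_one: "mat 1 \<in> G"
  using G_transvection[of 1 2 0] by (simp add: transvection_mat3 mat1_mat3)

lemma minv_mult: "a \<in> G \<Longrightarrow> b \<in> G \<Longrightarrow> minv (a ** b) = minv b ** minv a"
  using minv_eqI inverse_pair_mult G_inverse_pair by metis

lemma sigma_eq: "sigma cj g = Jmat ** ctrans cj (minv g) ** Jmat"
  by (simp add: sigma_def theta_def)

lemma sigma_G: "g \<in> G \<Longrightarrow> sigma cj g \<in> G"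
  unfolding sigma_eq by (intro G_conj G_ctrans G_minv inverse_pair_Jmat)

lemma sigma_mult: "g \<in> G \<Longrightarrow> h \<in> G \<Longrightarrow> sigma cj (g ** h) = sigma cj g ** sigma cj h"
  unfolding sigma_eq by (simp add: minv_mult ctrans_mult matrix_mul_assoc)

lemma sigma_one: "sigma cj (mat 1) = mat 1"
  by (simp add: sigma_eq minv_one)

lemma sigma_sigma: "g \<in> G \<Longrightarrow> sigma cj (sigma cj g) = g"
proof -
  assume g: "g \<in> G"
  have "inverse_pair (Jmat ** ctrans cj (minv g) ** Jmat) (Jmat ** ctrans cj g ** Jmat)"
    using inverse_pair_mult[OF inverse_pair_mult[OF inverse_pair_Jmat
          inverse_pair_ctrans[OF inverse_pair_sym[OF G_inverse_pair[OF g]]]] inverse_pair_Jmat]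
    by (simp add: matrix_mul_assoc)
  then show ?thesis
    unfolding sigma_eq by (simp add: minv_eqI ctrans_mult matrix_mul_assoc)
qed

lemma sigma_minv: "g \<in> G \<Longrightarrow> sigma cj (minv g) = minv (sigma cj g)"
proof -
  assume g: "g \<in> G"
  have i: "g ** minv g = mat 1" "minv g ** g = mat 1"
    using G_inverse_pair[OF g] by (simp_all add: inverse_pair_def)
  have "inverse_pair (sigma cj g) (sigma cj (minv g))"
    unfolding inverse_pair_def sigma_mult[OF g G_minv[OF g], symmetric]
      sigma_mult[OF G_minv[OF g] g, symmetric] i sigma_one by simp
  then show ?thesis by (metis minv_eqI)
qed

lemma sigma_conjgrp:
  assumes a: "a \<in> G" and X: "X \<subseteq> G"
  shows "sigma cj ` conjgrp a X = conjgrp (sigma cj a) (sigma cj ` X)"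
proof -
  have "sigma cj (a ** p ** minv a) = sigma cj a ** sigma cj p ** minv (sigma cj a)" if "p \<in> X" for p
    using that X a by (simp add: sigma_mult G_mult G_minv sigma_minv subset_iff)
  then show ?thesis unfolding conjgrp_def by (auto simp: image_image)
qed

lemma sigma_fixed_iff_J_unitary: "g \<in> G \<Longrightarrow> sigma cj g = g \<longleftrightarrow> J_unitary g"
proof
  assume g: "g \<in> G" and s: "sigma cj g = g"
  have "ctrans cj (minv g) = Jmat ** g ** Jmat"
    using s unfolding sigma_eq by (metis Jmat_Jmat matrix_mul_assoc matrix_mul_lid matrix_mul_rid)
  then have "minv g = Jmat ** ctrans cj g ** Jmat"
    by (metis ctrans_ctrans ctrans_mult ctrans_Jmat matrix_mul_assoc)
  then have "Jmat ** (Jmat ** ctrans cj g ** Jmat ** g) = Jmat"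
    using G_inverse_pair[OF g] by (simp add: inverse_pair_def)
  then show "J_unitary g" unfolding J_unitary_def by (simp add: matrix_mul_assoc)
next
  assume g: "g \<in> G" and u: "J_unitary g"
  show "sigma cj g = g"
    unfolding sigma_eq J_unitary_inverse[OF G_inverse_pair[OF g] u]
    by (simp add: ctrans_mult matrix_mul_assoc)
qed

lemma P1_eq: "P1 G = {g \<in> G. upper_triangular g}"
  by (simp add: P1_def upper_triangular_def)

lemma P1_subset: "P1 G \<subseteq> G"
  by (auto simp: P1_def)

lemma P1opp_eq: "P1opp G = {g \<in> G. lower_triangular g}"
  by (simp add: P1opp_def lower_triangular_def)

lemma sigma_upper_triangular: "g \<in> G \<Longrightarrow> upper_triangular g \<Longrightarrow> lower_triangular (sigma cj g)"
  unfolding sigma_eq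
  by (intro lower_triangular_mult)
    (simp_all add: lower_triangular_ctrans upper_triangular_inverse[OF G_inverse_pair],
     simp_all add: lower_triangular_def Jmat_def)

lemma sigma_lower_triangular: "g \<in> G \<Longrightarrow> lower_triangular g \<Longrightarrow> upper_triangular (sigma cj g)"
  unfolding sigma_eq
  by (intro upper_triangular_mult)
    (simp_all add: upper_triangular_ctrans lower_triangular_inverse[OF G_inverse_pair],
     simp_all add: upper_triangular_def Jmat_def)

lemma sigma_P1: "sigma cj ` P1 G = P1opp G"
proof
  show "sigma cj ` P1 G \<subseteq> P1opp G"
    by (auto simp: P1_eq P1opp_eq sigma_G sigma_upper_triangular)
  show "P1opp G \<subseteq> sigma cj ` P1 G"
  proof
    fix q assume q: "q \<in> P1opp G"
    then have "q = sigma cj (sigma cj q)" by (simp add: P1opp_eq sigma_sigma)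
    moreover have "sigma cj q \<in> P1 G"
      using q by (simp add: P1opp_eq P1_eq sigma_G sigma_lower_triangular)
    ultimately show "q \<in> sigma cj ` P1 G" by blast
  qed
qed

lemma sigma_P1opp: "sigma cj ` P1opp G = P1 G"
  unfolding sigma_P1[symmetric] by (auto simp: image_image P1_eq sigma_sigma)

lemma transvection_P1:
  "transvection 1 2 q \<in> P1 G" "transvection 1 3 q \<in> P1 G" "transvection 2 3 q \<in> P1 G"
  using G_transvection[of 1 2 q] G_transvection[of 1 3 q] G_transvection[of 2 3 q]
  by (auto simp: P1_eq upper_triangular_def transvection_def)

text \<open>
  Conjugating the transvections \<open>E\<^sub>1\<^sub>2(1), E\<^sub>1\<^sub>3(1) \<in> P\<^sub>1\<close> by \<open>x\<inverse>\<close> and \<open>E\<^sub>2\<^sub>3(1) \<in> P\<^sub>1\<close> by \<open>x\<close>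
  stays inside \<open>P\<^sub>1\<close>; comparing entries forces the lower entries of \<open>x\<close> to vanish.
\<close>

lemma P1_self_normalising:
  assumes x: "x \<in> G" and c: "conjgrp x (P1 G) = P1 G"
  shows "x \<in> P1 G"
proof -
  have i: "inverse_pair x (minv x)" using G_inverse_pair x by blast
  have bk: "\<exists>p'. p' \<in> P1 G \<and> p ** x = x ** p'" if p: "p \<in> P1 G" for p
  proof -
    from p c obtain p' where p': "p' \<in> P1 G" "p = x ** p' ** minv x" unfolding conjgrp_def by auto
    then have "p ** x = x ** p'" using i by (simp add: inverse_pair_cancel)
    then show ?thesis using p' by blast
  qed
  have fw: "\<exists>p'. p' \<in> P1 G \<and> x ** p = p' ** x" if p: "p \<in> P1 G" for p
  proof -
    have "x ** p ** minv x \<in> P1 G" using p c unfolding conjgrp_def by auto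
    moreover have "x ** p = (x ** p ** minv x) ** x" using i by (simp add: inverse_pair_cancel)
    ultimately show ?thesis by blast
  qed
  obtain p1 where p1: "p1 \<in> P1 G" "transvection 1 2 1 ** x = x ** p1" using bk[OF transvection_P1(1)] by blast
  obtain p2 where p2: "p2 \<in> P1 G" "transvection 1 3 1 ** x = x ** p2" using bk[OF transvection_P1(2)] by blast
  obtain p3 where p3: "p3 \<in> P1 G" "x ** transvection 2 3 1 = p3 ** x" using fw[OF transvection_P1(3)] by blast
  have "x$2$1 = x$2$1 * p1$1$1" "x$1$1 + x$2$1 = x$1$1 * p1$1$1"
    using arg_cong[OF p1(2), of "\<lambda>m. m$2$1"] arg_cong[OF p1(2), of "\<lambda>m. m$1$1"] p1(1)
    by (simp_all add: matrix_mult_nth3 transvection_def P1_eq upper_triangular_def)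
  then have x21: "x$2$1 = 0" by (rule scalar_cancel_col)
  have "x$3$1 = x$3$1 * p2$1$1" "x$1$1 + x$3$1 = x$1$1 * p2$1$1"
    using arg_cong[OF p2(2), of "\<lambda>m. m$3$1"] arg_cong[OF p2(2), of "\<lambda>m. m$1$1"] p2(1)
    by (simp_all add: matrix_mult_nth3 transvection_def P1_eq upper_triangular_def)
  then have x31: "x$3$1 = 0" by (rule scalar_cancel_col)
  have "x$3$2 = p3$3$3 * x$3$2" "x$3$3 + x$3$2 = p3$3$3 * x$3$3"
    using arg_cong[OF p3(2), of "\<lambda>m. m$3$2"] arg_cong[OF p3(2), of "\<lambda>m. m$3$3"] p3(1)
    by (simp_all add: matrix_mult_nth3 transvection_def P1_eq upper_triangular_def add.commute)
  then have x32: "x$3$2 = 0" by (rule scalar_cancel_row)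
  show ?thesis using x x21 x31 x32 by (simp add: P1_eq upper_triangular_def)
qed

lemma conjgrp_P1_eqD:
  "a \<in> G \<Longrightarrow> b \<in> G \<Longrightarrow> conjgrp a (P1 G) = conjgrp b (P1 G) \<Longrightarrow> minv b ** a \<in> P1 G"
  by (intro P1_self_normalising G_mult G_minv conjgrp_eq_imp_minv_mult_normalises[OF G_inverse_pair G_inverse_pair])

lemma conjgrp_P1opp_eqD:
  assumes a: "a \<in> G" and b: "b \<in> G" and c: "conjgrp a (P1opp G) = conjgrp b (P1opp G)"
  shows "minv b ** a \<in> P1opp G"
proof -
  have X: "P1opp G \<subseteq> G" by (auto simp: P1opp_eq)
  have "conjgrp (sigma cj a) (P1 G) = conjgrp (sigma cj b) (P1 G)"
    using arg_cong[OF c, of "image (sigma cj)"] sigma_conjgrp[OF a X] sigma_conjgrp[OF b X]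
    by (simp add: sigma_P1opp)
  then have "sigma cj (minv b ** a) \<in> P1 G"
    using conjgrp_P1_eqD a b sigma_G by (simp add: sigma_mult sigma_minv G_minv)
  then have "sigma cj (sigma cj (minv b ** a)) \<in> P1opp G" using sigma_P1 by blast
  then show ?thesis using a b by (simp add: sigma_sigma G_mult G_minv)
qed

subsection \<open>Weyl elements and the standard \<open>\<sigma>\<close>-parabolics\<close>

definition w2 :: "'a^3^3" where "w2 = mat3 0 1 0 (-1) 0 0 0 0 1"

definition w2' :: "'a^3^3" where "w2' = mat3 0 (-1) 0 1 0 0 0 0 1"

definition w3 :: "'a^3^3" where "w3 = mat3 0 0 1 (-1) 0 0 0 (-1) 0"

definition w3' :: "'a^3^3" where "w3' = mat3 0 (-1) 0 0 0 (-1) 1 0 0"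

lemma inverse_pair_w2: "inverse_pair w2 w2'"
  by (simp add: inverse_pair_def w2_def w2'_def mat3_mult mat1_mat3)

lemma inverse_pair_w3: "inverse_pair w3 w3'"
  by (simp add: inverse_pair_def w3_def w3'_def mat3_mult mat1_mat3)

lemma w12_G:
  assumes "u * v = 1" "v * u = 1"
  shows "mat3 0 u 0 (-v) 0 0 0 0 1 \<in> G"
proof -
  have "mat3 0 u 0 (-v) 0 0 0 0 1 = transvection 1 2 u ** transvection 2 1 (-v) ** transvection 1 2 u"
    using assms by (simp add: transvection_mat3 mat3_mult algebra_simps)
  moreover have "transvection 1 2 u \<in> G" "transvection 2 1 (-v) \<in> G" by (simp_all add: G_transvection)
  ultimately show ?thesis by (metis G_mult)
qed

lemma w23_G:
  assumes "u * v = 1" "v * u = 1"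
  shows "mat3 1 0 0 0 0 u 0 (-v) 0 \<in> G"
proof -
  have "mat3 1 0 0 0 0 u 0 (-v) 0 = transvection 2 3 u ** transvection 3 2 (-v) ** transvection 2 3 u"
    using assms by (simp add: transvection_mat3 mat3_mult algebra_simps)
  moreover have "transvection 2 3 u \<in> G" "transvection 3 2 (-v) \<in> G" by (simp_all add: G_transvection)
  ultimately show ?thesis by (metis G_mult)
qed

lemma w2_G: "w2 \<in> G"
  unfolding w2_def using w12_G[of 1 1] by simp

lemma w3_G: "w3 \<in> G"
proof -
  have "(w3::'a^3^3) = mat3 0 1 0 (-1) 0 0 0 0 1 ** mat3 1 0 0 0 0 1 0 (-1) 0"
    by (simp add: w3_def mat3_mult)
  then show ?thesis using w12_G[of 1 1] w23_G[of 1 1] by (metis G_mult mult_1)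
qed

lemma diag12_G: assumes "u * v = 1" "v * u = 1" shows "diag3 u v 1 \<in> G"
proof -
  have "diag3 u v 1 = mat3 0 u 0 (-v) 0 0 0 0 1 ** mat3 0 (-1) 0 (- (-1)) 0 0 0 0 1"
    by (simp add: diag3_mat3 mat3_mult)
  then show ?thesis using w12_G[OF assms] w12_G[of "-1" "-1"] by (simp add: G_mult)
qed

lemma diag23_G: assumes "u * v = 1" "v * u = 1" shows "diag3 1 u v \<in> G"
proof -
  have "diag3 1 u v = mat3 1 0 0 0 0 u 0 (-v) 0 ** mat3 1 0 0 0 0 (-1) 0 (- (-1)) 0"
    by (simp add: diag3_mat3 mat3_mult)
  then show ?thesis using w23_G[OF assms] w23_G[of "-1" "-1"] by (simp add: G_mult)
qed

lemma P2_eq_conjgrp_w2: "P2 G = conjgrp w2 (P1 G)"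
proof
  show "conjgrp w2 (P1 G) \<subseteq> P2 G"
  proof
    fix q assume "q \<in> conjgrp w2 (P1 G)"
    then obtain p where p: "p \<in> G" "upper_triangular p" "q = w2 ** p ** w2'"
      unfolding conjgrp_def P1_eq using minv_eqI[OF inverse_pair_w2] by auto
    have "q \<in> G" using p G_conj[OF p(1) inverse_pair_w2] by simp
    moreover have "q$1$2 = 0 \<and> q$3$1 = 0 \<and> q$3$2 = 0" using p
      by (subst (asm) mat3_entries[of p]) (simp add: w2_def w2'_def mat3_mult upper_triangular_def)
    ultimately show "q \<in> P2 G" by (simp add: P2_def)
  qed
  show "P2 G \<subseteq> conjgrp w2 (P1 G)"
  proof
    fix q assume q: "q \<in> P2 G"
    let ?p = "w2' ** q ** w2"
    have "?p \<in> G" using q G_conj[OF _ inverse_pair_sym[OF inverse_pair_w2]] by (simp add: P2_def)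
    moreover have "upper_triangular ?p" using q
      by (subst mat3_entries[of q]) (simp add: w2_def w2'_def mat3_mult upper_triangular_def P2_def)
    moreover have "q = w2 ** ?p ** minv w2" using inverse_pair_w2
      by (simp add: minv_eqI inverse_pair_def matrix_mul_assoc inverse_pair_cancel)
    ultimately show "q \<in> conjgrp w2 (P1 G)" unfolding conjgrp_def P1_eq by blast
  qed
qed

lemma P3_eq_conjgrp_w3: "P3 G = conjgrp w3 (P1 G)"
proof
  show "conjgrp w3 (P1 G) \<subseteq> P3 G"
  proof
    fix q assume "q \<in> conjgrp w3 (P1 G)"
    then obtain p where p: "p \<in> G" "upper_triangular p" "q = w3 ** p ** w3'"
      unfolding conjgrp_def P1_eq using minv_eqI[OF inverse_pair_w3] by auto
    have "q \<in> G" using p G_conj[OF p(1) inverse_pair_w3] by simp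
    moreover have "q$1$2 = 0 \<and> q$1$3 = 0 \<and> q$3$2 = 0" using p
      by (subst (asm) mat3_entries[of p]) (simp add: w3_def w3'_def mat3_mult upper_triangular_def)
    ultimately show "q \<in> P3 G" by (simp add: P3_def)
  qed
  show "P3 G \<subseteq> conjgrp w3 (P1 G)"
  proof
    fix q assume q: "q \<in> P3 G"
    let ?p = "w3' ** q ** w3"
    have "?p \<in> G" using q G_conj[OF _ inverse_pair_sym[OF inverse_pair_w3]] by (simp add: P3_def)
    moreover have "upper_triangular ?p" using q
      by (subst mat3_entries[of q]) (simp add: w3_def w3'_def mat3_mult upper_triangular_def P3_def)
    moreover have "q = w3 ** ?p ** minv w3" using inverse_pair_w3
      by (simp add: minv_eqI inverse_pair_def matrix_mul_assoc inverse_pair_cancel)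
    ultimately show "q \<in> conjgrp w3 (P1 G)" unfolding conjgrp_def P1_eq by blast
  qed
qed

lemma conjgrp_diag3_pattern:
  assumes nz: "x \<noteq> 0" "y \<noteq> 0" "z \<noteq> 0"
    and X: "X = {g \<in> G. \<forall>(i,j)\<in>Z. g$i$j = 0}"
  shows "conjgrp (diag3 x y z) X = X"
proof -
  have i: "inverse_pair (diag3 x y z) (diag3_inv x y z)" using inverse_pair_diag3 nz by blast
  have entry: "(diag3 a b c ** g ** diag3 a' b' c') $ i $ j =
      (if i = 1 then a else if i = 2 then b else c) * g$i$j * (if j = 1 then a' else if j = 2 then b' else c')"
    for a b c a' b' c' :: 'a and g i j
    using exhaust_3[of i] exhaust_3[of j] by (auto simp: matrix_mult_nth3 diag3_def mult.assoc)
  have nzs: "(if i = 1 then x else if i = 2 then y else z) \<noteq> 0"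
     "(if i = 1 then dinv x else if i = 2 then dinv y else dinv z) \<noteq> 0" for i::3
    using nz dinv_nonzero by auto
  show ?thesis
  proof
    show "conjgrp (diag3 x y z) X \<subseteq> X"
      unfolding conjgrp_def minv_eqI[OF i] diag3_inv_def X
      using G_conj[OF _ i[unfolded diag3_inv_def]] by (auto simp: entry)
    show "X \<subseteq> conjgrp (diag3 x y z) X"
    proof
      fix q assume q: "q \<in> X"
      let ?p = "diag3_inv x y z ** q ** diag3 x y z"
      have "?p \<in> X"
        using q G_conj[OF _ inverse_pair_sym[OF i]] nzs unfolding X diag3_inv_def by (auto simp: entry)
      moreover have "q = diag3 x y z ** ?p ** minv (diag3 x y z)" using i minv_eqI[OF i]
        by (simp add: inverse_pair_def matrix_mul_assoc inverse_pair_cancel)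
      ultimately show "q \<in> conjgrp (diag3 x y z) X" unfolding conjgrp_def by blast
    qed
  qed
qed

lemma conjgrp_diag3:
  assumes "x \<noteq> 0" "y \<noteq> 0" "z \<noteq> 0"
  shows "conjgrp (diag3 x y z) (P1 G) = P1 G" "conjgrp (diag3 x y z) (P2 G) = P2 G"
    "conjgrp (diag3 x y z) (P3 G) = P3 G" "conjgrp (diag3 x y z) (P1opp G) = P1opp G"
  by (rule conjgrp_diag3_pattern[OF assms, where Z = "{(2,1),(3,1),(3,2)}"], force simp: P1_def)
    (rule conjgrp_diag3_pattern[OF assms, where Z = "{(1,2),(3,1),(3,2)}"], force simp: P2_def,
     rule conjgrp_diag3_pattern[OF assms, where Z = "{(1,2),(1,3),(3,2)}"], force simp: P3_def,
     rule conjgrp_diag3_pattern[OF assms, where Z = "{(1,2),(1,3),(2,3)}"], force simp: P1opp_def)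

lemma conjgrp_P1_sigma_parabolic:
  assumes w: "w \<in> G" and s: "sigma cj w = w ** diag3 x y z" and nz: "x \<noteq> 0" "y \<noteq> 0" "z \<noteq> 0"
  shows "conjgrp w (P1 G) \<in> sigma_parabolics cj G"
proof -
  have "sigma cj ` conjgrp w (P1 G) = conjgrp (w ** diag3 x y z) (P1opp G)"
    using sigma_conjgrp[OF w P1_subset] s by (simp add: sigma_P1)
  also have "\<dots> = conjgrp w (conjgrp (diag3 x y z) (P1opp G))"
    using conjgrp_conjgrp[OF G_inverse_pair[OF w] inverse_pair_diag3[OF nz]] by simp
  also have "\<dots> = conjgrp w (P1opp G)" using conjgrp_diag3(4)[OF nz] by simp
  finally show ?thesis
    unfolding sigma_parabolics_def minparabolics_def opposite_def using w by blast
qed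

lemma sigma_w2: "sigma cj w2 = w2 ** diag3 (-1) (-1) 1"
  unfolding sigma_eq minv_eqI[OF inverse_pair_w2]
  by (simp add: w2_def w2'_def ctrans_mat3 Jmat_mat3 mat3_mult diag3_mat3 cj_minus)

lemma sigma_w3: "sigma cj w3 = w3 ** diag3 (-1) 1 (-1)"
  unfolding sigma_eq minv_eqI[OF inverse_pair_w3]
  by (simp add: w3_def w3'_def ctrans_mat3 Jmat_mat3 mat3_mult diag3_mat3 cj_minus)

lemma standard_sigma_parabolics:
  "P1 G \<in> sigma_parabolics cj G" "P2 G \<in> sigma_parabolics cj G" "P3 G \<in> sigma_parabolics cj G"
  using conjgrp_P1_sigma_parabolic[OF G_one, of 1 1 1]
    conjgrp_P1_sigma_parabolic[OF w2_G sigma_w2] conjgrp_P1_sigma_parabolic[OF w3_G sigma_w3]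
  by (simp_all add: conjgrp_one sigma_one diag3_one P2_eq_conjgrp_w2 P3_eq_conjgrp_w3 scalar_one_neq_zero)

lemma weyl_inverse_J_forms:
  "ctrans cj w2' ** diag3 (-1) 1 (-1) ** w2' = Jmat" "ctrans cj w3' ** diag3 (-1) (-1) 1 ** w3' = Jmat"
  by (simp_all add: w2'_def w3'_def ctrans_mat3 diag3_mat3 mat3_mult Jmat_mat3 cj_minus)

subsection \<open>Every \<open>\<sigma>\<close>-parabolic is conjugate to a standard one by an element of \<open>U(1,2)\<close>\<close>

text \<open>
  \<open>P = k P\<^sub>1 k\<inverse>\<close> is opposite to \<open>\<sigma>(P) = \<sigma>(k) P\<^sub>1\<^sup>- \<sigma>(k)\<inverse>\<close> iff \<open>k\<inverse> \<sigma>(k) \<in> P\<^sub>1\<^sup>-\<close>; this element is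
  \<open>(k\<^sup>\<dagger> J k)\<inverse> J\<close>, so the hermitian matrix \<open>k\<^sup>\<dagger> J k\<close> is lower triangular, i.e. real diagonal.
\<close>

lemma sigma_parabolic_J_form_diag3:
  assumes P: "P \<in> sigma_parabolics cj G"
  obtains k r1 r2 r3 where "k \<in> G" "P = conjgrp k (P1 G)"
    "ctrans cj k ** Jmat ** k = diag3 (rl r1) (rl r2) (rl r3)" "r1 \<noteq> 0" "r2 \<noteq> 0" "r3 \<noteq> 0"
proof -
  obtain k where k: "k \<in> G" "P = conjgrp k (P1 G)" "sigma cj ` P = conjgrp k (P1opp G)"
    using P unfolding sigma_parabolics_def opposite_def by blast
  have "sigma cj ` P = conjgrp (sigma cj k) (P1opp G)"
    using sigma_conjgrp[OF k(1) P1_subset] k(2) by (simp add: sigma_P1)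
  then have "minv k ** sigma cj k \<in> P1opp G"
    using conjgrp_P1opp_eqD[OF sigma_G[OF k(1)] k(1)] k(3) by simp
  moreover define X where "X = minv k ** Jmat ** ctrans cj (minv k)"
  moreover have "X = (minv k ** sigma cj k) ** Jmat"
    unfolding X_def sigma_eq by (simp add: matrix_mul_assoc)
  ultimately have "lower_triangular X"
    using lower_triangular_mult[of "minv k ** sigma cj k" Jmat]
    by (simp add: P1opp_eq lower_triangular_def Jmat_def)
  define Y where "Y = ctrans cj k ** Jmat ** k"
  have i: "inverse_pair k (minv k)" "inverse_pair (ctrans cj k) (ctrans cj (minv k))"
    using G_inverse_pair[OF k(1)] inverse_pair_ctrans by blast+
  have XY: "inverse_pair X Y"
    using inverse_pair_mult[OF inverse_pair_mult[OF inverse_pair_sym[OF i(1)] inverse_pair_Jmat]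
        inverse_pair_sym[OF i(2)]]
    unfolding X_def Y_def by (simp add: matrix_mul_assoc)
  have "lower_triangular Y"
    using lower_triangular_inverse[OF XY] \<open>lower_triangular X\<close> .
  moreover have "ctrans cj Y = Y" unfolding Y_def by (simp add: ctrans_mult matrix_mul_assoc)
  ultimately obtain r1 r2 r3 where Y: "Y = diag3 (rl r1) (rl r2) (rl r3)"
    using hermitian_lower_triangular_diag3 by blast
  have "rl r1 * X$1$1 = 1" "rl r2 * X$2$2 = 1" "rl r3 * X$3$3 = 1"
    using XY[unfolded inverse_pair_def, THEN conjunct2] Y
    by (simp_all add: matrix3_eq_iff matrix_mult_nth3 diag3_def mat_def)
  then have "r1 \<noteq> 0" "r2 \<noteq> 0" "r3 \<noteq> 0" using scalar_one_neq_zero by auto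
  then show ?thesis using that k Y unfolding Y_def by blast
qed

lemma sigma_parabolic_signature_form:
  assumes P: "P \<in> sigma_parabolics cj G"
  obtains f0 f0' where "inverse_pair f0 f0'" "P = conjgrp f0 (P1 G)"
    "ctrans cj f0 ** Jmat ** f0 \<in> {Jmat, diag3 (-1) 1 (-1), diag3 (-1) (-1) 1}"
proof -
  obtain k r1 r2 r3 where k: "k \<in> G" "P = conjgrp k (P1 G)"
    and D: "ctrans cj k ** Jmat ** k = diag3 (rl r1) (rl r2) (rl r3)" and nz: "r1 \<noteq> 0" "r2 \<noteq> 0" "r3 \<noteq> 0"
    using sigma_parabolic_J_form_diag3[OF P] by blast
  define S where "S = diag3 (rl (1 / sqrt \<bar>r1\<bar>)) (rl (1 / sqrt \<bar>r2\<bar>)) (rl (1 / sqrt \<bar>r3\<bar>))"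
  have Snz: "rl (1 / sqrt \<bar>r1\<bar>) \<noteq> 0" "rl (1 / sqrt \<bar>r2\<bar>) \<noteq> 0" "rl (1 / sqrt \<bar>r3\<bar>) \<noteq> 0"
    using nz by (simp_all add: rl_eq_0_iff)
  obtain f0' where "inverse_pair (k ** S) f0'"
    unfolding S_def using inverse_pair_mult[OF G_inverse_pair[OF k(1)] inverse_pair_diag3[OF Snz]] by blast
  moreover have "P = conjgrp (k ** S) (P1 G)"
    unfolding k(2) S_def
    using conjgrp_conjgrp[OF G_inverse_pair[OF k(1)] inverse_pair_diag3[OF Snz], of "P1 G"] conjgrp_diag3(1)[OF Snz]
    by simp
  moreover have "0 < r1 \<and> r2 < 0 \<and> r3 < 0 \<or> r1 < 0 \<and> 0 < r2 \<and> r3 < 0 \<or> r1 < 0 \<and> r2 < 0 \<and> 0 < r3"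
    using J_form_has_positive_entry[OF D G_inverse_pair[OF k(1)]] J_form_not_two_positive[OF D] nz
    by linarith
  then have "ctrans cj (k ** S) ** Jmat ** (k ** S) \<in> {Jmat, diag3 (-1) 1 (-1), diag3 (-1) (-1) 1}"
    unfolding S_def J_form_normalise[OF D nz] using nz by (auto simp: rl_sgn Jmat_diag3)
  ultimately show ?thesis using that by blast
qed

lemma sigma_parabolic_J_unitary_conj:
  assumes P: "P \<in> sigma_parabolics cj G"
  obtains f f' where "inverse_pair f f'" "J_unitary f"
    "P = conjgrp f (P1 G) \<or> P = conjgrp f (P2 G) \<or> P = conjgrp f (P3 G)"
proof -
  obtain f0 f0' where i0: "inverse_pair f0 f0'" and P0: "P = conjgrp f0 (P1 G)"
    and D0: "ctrans cj f0 ** Jmat ** f0 \<in> {Jmat, diag3 (-1) 1 (-1), diag3 (-1) (-1) 1}"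
    by (rule sigma_parabolic_signature_form[OF P])
  have f0_mult_J_unitary: "J_unitary (f0 ** w')" if "ctrans cj w' ** (ctrans cj f0 ** Jmat ** f0) ** w' = Jmat" for w'
    using that unfolding J_unitary_def by (simp add: ctrans_mult matrix_mul_assoc)
  have weyl: "inverse_pair (f0 ** w') (w ** f0')" "P = conjgrp (f0 ** w') (conjgrp w (P1 G))"
    if "inverse_pair w w'" for w w'
    using inverse_pair_mult[OF i0 inverse_pair_sym[OF that]] conjgrp_mult_inverse[OF i0 that] P0 by simp_all
  from D0 consider "ctrans cj f0 ** Jmat ** f0 = Jmat" | "ctrans cj f0 ** Jmat ** f0 = diag3 (-1) 1 (-1)"
    | "ctrans cj f0 ** Jmat ** f0 = diag3 (-1) (-1) 1" by blast
  then show ?thesis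
  proof cases
    case 1
    then show ?thesis using that i0 P0 unfolding J_unitary_def by blast
  next
    case 2
    then have "J_unitary (f0 ** w2')" by (intro f0_mult_J_unitary) (simp add: weyl_inverse_J_forms)
    then show ?thesis using that weyl[OF inverse_pair_w2] P2_eq_conjgrp_w2 by metis
  next
    case 3
    then have "J_unitary (f0 ** w3')" by (intro f0_mult_J_unitary) (simp add: weyl_inverse_J_forms)
    then show ?thesis using that weyl[OF inverse_pair_w3] P3_eq_conjgrp_w3 by metis
  qed
qed

subsection \<open>The identity component \<open>H\<close> of \<open>G\<^sup>\<sigma>\<close>\<close>

abbreviation G_sigma :: "('a^3^3) set" where
  "G_sigma \<equiv> {g \<in> G. sigma cj g = g}"

lemma H_subset: "Hgrp cj G \<subseteq> G_sigma"
  unfolding Hgrp_def by (rule connected_component_subset)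

lemma H_G: "h \<in> Hgrp cj G \<Longrightarrow> h \<in> G"
  using H_subset by blast

lemma H_J_unitary: "h \<in> Hgrp cj G \<Longrightarrow> J_unitary h"
  using H_subset sigma_fixed_iff_J_unitary by blast

lemma one_H: "mat 1 \<in> Hgrp cj G"
  unfolding Hgrp_def using G_one sigma_one by (simp add: connected_component_refl)

lemma left_translate_H:
  assumes a: "a \<in> G_sigma"
  shows "(\<lambda>p. a ** p) ` Hgrp cj G \<subseteq> connected_component_set G_sigma a"
proof (rule connected_component_maximal)
  show "a \<in> (\<lambda>p. a ** p) ` Hgrp cj G"
    using one_H by (metis image_eqI matrix_mul_rid)
  show "connected ((\<lambda>p. a ** p) ` Hgrp cj G)"
    unfolding Hgrp_def by (intro connected_continuous_image continuous_intros) simp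
  show "(\<lambda>p. a ** p) ` Hgrp cj G \<subseteq> G_sigma"
    using a H_subset by (auto simp: G_mult sigma_mult)
qed

lemma H_mult: "h \<in> Hgrp cj G \<Longrightarrow> k \<in> Hgrp cj G \<Longrightarrow> h ** k \<in> Hgrp cj G"
  using left_translate_H[of h] H_subset connected_component_eq[of h G_sigma "mat 1"]
  unfolding Hgrp_def by blast

lemma H_minv:
  assumes h: "h \<in> Hgrp cj G"
  shows "minv h \<in> Hgrp cj G"
proof -
  have hi: "minv h \<in> G_sigma"
    using h H_subset by (auto simp: G_minv sigma_minv)
  have "mat 1 = minv h ** h"
    using G_inverse_pair[OF H_G[OF h]] by (simp add: inverse_pair_def)
  then have "mat 1 \<in> connected_component_set G_sigma (minv h)"
    using left_translate_H[OF hi] h by blast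
  then show ?thesis
    unfolding Hgrp_def using hi connected_component_sym connected_component_refl by fastforce
qed

lemma path_endpoint_H:
  fixes \<gamma> :: "real \<Rightarrow> 'a^3^3"
  assumes "continuous_on {0..1} \<gamma>" "\<And>t. t \<in> {0..1} \<Longrightarrow> \<gamma> t \<in> G \<and> J_unitary (\<gamma> t)"
    and "\<gamma> 0 = mat 1"
  shows "\<gamma> 1 \<in> Hgrp cj G"
proof -
  have "\<gamma> ` {0..1} \<subseteq> connected_component_set G_sigma (mat 1)"
  proof (rule connected_component_maximal)
    show "mat 1 \<in> \<gamma> ` {0..1}" using assms(3) by (metis atLeastAtMost_iff image_eqI zero_le_one order_refl)
  qed (use assms sigma_fixed_iff_J_unitary in \<open>auto intro: connected_continuous_image\<close>)
  then show ?thesis unfolding Hgrp_def by (auto simp: image_subset_iff)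
qed

lemma Horbit_conjgrp:
  assumes h: "h \<in> Hgrp cj G"
  shows "Horbit cj G (conjgrp h X) = Horbit cj G X"
proof -
  have ih: "inverse_pair h (minv h)" using G_inverse_pair H_G h by blast
  show ?thesis
    unfolding Horbit_def
  proof (intro set_eqI iffI; elim CollectE exE conjE)
    fix Y k assume Y: "Y = conjgrp k (conjgrp h X)" and k: "k \<in> Hgrp cj G"
    have "Y = conjgrp (k ** h) X"
      unfolding Y by (rule conjgrp_conjgrp[OF G_inverse_pair[OF H_G[OF k]] ih])
    with H_mult[OF k h] show "Y \<in> {conjgrp k X |k. k \<in> Hgrp cj G}" by blast
  next
    fix Y k assume Y: "Y = conjgrp k X" and k: "k \<in> Hgrp cj G"
    have "Y = conjgrp (k ** minv h) (conjgrp h X)"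
      unfolding Y by (rule conjgrp_mult_inverse[OF G_inverse_pair[OF H_G[OF k]] ih, symmetric])
    with H_mult[OF k H_minv[OF h]] show "Y \<in> {conjgrp k (conjgrp h X) |k. k \<in> Hgrp cj G}" by blast
  qed
qed

lemma Horbit_eq_imp_conjgrp: "Horbit cj G X = Horbit cj G Y \<Longrightarrow> \<exists>h \<in> Hgrp cj G. Y = conjgrp h X"
proof -
  assume "Horbit cj G X = Horbit cj G Y"
  moreover have "Y \<in> Horbit cj G Y"
    unfolding Horbit_def using one_H conjgrp_one[of Y] by blast
  ultimately have "Y \<in> Horbit cj G X" by simp
  then show ?thesis unfolding Horbit_def by blast
qed

lemma boost_G: "boost s \<in> G"
proof -
  define c where "c = sqrt (1 + s\<^sup>2)"
  have c0: "0 < c" unfolding c_def by (simp add: add_pos_nonneg)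
  have cc: "c * c = 1 + s\<^sup>2" unfolding c_def by (simp add: add_nonneg_nonneg)
  have e1: "c * (s / c) = s" "s / c * c = s" using c0 by simp_all
  have e2: "s / c * c * (s / c) + 1 / c = c" using c0 cc by (simp add: field_simps power2_eq_square)
  have "boost s = transvection 2 1 (rl (s/c)) ** diag3 (rl c) (rl (1/c)) 1 ** transvection 1 2 (rl (s/c))"
    unfolding boost_def c_def[symmetric] using c0 e2
    by (simp add: transvection_mat3 diag3_mat3 mat3_mult rl_mult[symmetric] rl_add[symmetric] e1 del: rl_one)
  moreover have "diag3 (rl c) (rl (1/c)) 1 \<in> G"
    using c0 by (intro diag12_G) (simp_all add: rl_inverse)
  moreover have "transvection 2 1 (rl (s/c)) \<in> G" "transvection 1 2 (rl (s/c)) \<in> G"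
    by (simp_all add: G_transvection)
  ultimately show ?thesis by (metis G_mult)
qed

lemma conj_boost_H:
  assumes i: "inverse_pair R (ctrans cj R)" and u: "J_unitary R"
  shows "R ** boost s ** ctrans cj R \<in> Hgrp cj G"
proof -
  have "(\<lambda>t. R ** boost (t * s) ** ctrans cj R) 1 \<in> Hgrp cj G"
  proof (rule path_endpoint_H)
    show "continuous_on {0..1} (\<lambda>t. R ** boost (t * s) ** ctrans cj R)"
      unfolding boost_def by (intro continuous_intros)
    show "R ** boost (t * s) ** ctrans cj R \<in> G \<and> J_unitary (R ** boost (t * s) ** ctrans cj R)" for t
      using G_conj[OF boost_G i] J_unitary_mult[OF J_unitary_mult[OF u boost_J_unitary] J_unitary_ctrans[OF i u]]
      by blast
    show "R ** boost (0 * s) ** ctrans cj R = mat 1"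
      using i by (simp add: boost_def mat1_mat3[symmetric] inverse_pair_def)
  qed
  then show ?thesis by simp
qed

lemma rotation_G:
  assumes nb: "nrm b \<le> 1"
  shows "rotation b \<in> G"
proof (cases "nrm b = 1")
  case True
  then have "rotation b = mat3 1 0 0 0 0 (- cj b) 0 (- (- b)) 0" unfolding rotation_def by simp
  moreover have "mat3 1 0 0 0 0 (- cj b) 0 (- (- b)) 0 \<in> G"
    by (rule w23_G) (simp_all add: cj_mult_self mult_cj_self True)
  ultimately show ?thesis by simp
next
  case False
  define r where "r = sqrt (1 - nrm b)"
  have r0: "0 < r" and rr: "r * r = 1 - nrm b" using nb False unfolding r_def by simp_all
  define \<rho> where "\<rho> = rl r"
  define \<iota> where "\<iota> = rl (1 / r)"
  have ri: "\<rho> * \<iota> = 1" "\<iota> * \<rho> = 1" unfolding \<rho>_def \<iota>_def using r0 by (simp_all add: rl_inverse)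
  define \<beta> where "\<beta> = b * \<iota>"
  define \<gamma> where "\<gamma> = - (\<iota> * cj b)"
  have e1: "\<rho> * \<gamma> = - cj b" unfolding \<gamma>_def by (simp add: mult.assoc[symmetric] ri)
  have e2: "\<beta> * \<rho> = b" unfolding \<beta>_def by (simp add: mult.assoc ri)
  have e3: "b * \<gamma> + \<iota> = \<rho>"
  proof -
    have bi: "b * \<iota> = \<iota> * b" unfolding \<iota>_def by (rule rl_central[symmetric])
    have "b * \<gamma> + \<iota> = - (\<iota> * b * cj b) + \<iota>"
      unfolding \<gamma>_def by (simp add: mult.assoc[symmetric] bi)
    also have "\<dots> = \<iota> * (1 - b * cj b)" by (simp add: algebra_simps)
    also have "\<dots> = rl (1 / r) * rl (1 - nrm b)" by (simp add: mult_cj_self \<iota>_def rl_diff)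
    also have "\<dots> = rl (1 / r * (1 - nrm b))" by (simp only: rl_mult)
    also have "1 / r * (1 - nrm b) = r" using rr r0 by (simp add: field_simps)
    finally show ?thesis by (simp add: \<rho>_def)
  qed
  have "transvection 3 2 \<beta> ** diag3 1 \<rho> \<iota> ** transvection 2 3 \<gamma>
      = mat3 1 0 0 0 \<rho> (\<rho> * \<gamma>) 0 (\<beta> * \<rho>) (\<beta> * \<rho> * \<gamma> + \<iota>)"
    by (simp add: transvection_mat3 diag3_mat3 mat3_mult)
  also have "\<dots> = rotation b"
    unfolding rotation_def r_def[symmetric] \<rho>_def[symmetric] by (simp only: e1 e2 e3)
  finally have "rotation b = transvection 3 2 \<beta> ** diag3 1 \<rho> \<iota> ** transvection 2 3 \<gamma>" ..
  moreover have "diag3 1 \<rho> \<iota> \<in> G" by (rule diag23_G[OF ri])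
  moreover have "transvection 3 2 \<beta> \<in> G" "transvection 2 3 \<gamma> \<in> G"
    by (simp_all add: G_transvection)
  ultimately show ?thesis by (metis G_mult)
qed

lemma rotation_H:
  assumes nb: "nrm b \<le> 1"
  shows "rotation b \<in> Hgrp cj G"
proof -
  have small: "nrm (rl t * b) \<le> 1" if "t \<in> {0..1}" for t
  proof -
    have "t * t * nrm b \<le> 1 * 1" using that nb by (intro mult_mono) (simp_all add: mult_le_one)
    then show ?thesis by (simp add: nrm_mult nrm_rl)
  qed
  have "(\<lambda>t. rotation (rl t * b)) 1 \<in> Hgrp cj G"
  proof (rule path_endpoint_H)
    show "continuous_on {0..1} (\<lambda>t. rotation (rl t * b))"
      unfolding rotation_def by (simp add: nrm_mult nrm_rl) (intro continuous_intros)
    show "rotation (rl t * b) \<in> G \<and> J_unitary (rotation (rl t * b))" if "t \<in> {0..1}" for t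
      using rotation_G rotation_J_unitary small[OF that] by blast
    show "rotation (rl 0 * b) = mat 1" by (simp add: rotation_def mat1_mat3)
  qed
  then show ?thesis by simp
qed

subsection \<open>Every element of \<open>U(1,2)\<close> is an element of \<open>H\<close> times a diagonal matrix\<close>

text \<open>
  The first column \<open>(a, a\<^sub>2, a\<^sub>3)\<close> of \<open>f \<in> U(1,2)\<close> has \<open>|a|\<^sup>2 = 1 + s\<^sup>2\<close>, \<open>s\<^sup>2 = |a\<^sub>2|\<^sup>2 + |a\<^sub>3|\<^sup>2\<close>;
  up to a unit factor it is the first column of the boost by \<open>s\<close> conjugated by a rotation \<open>R\<close>.
\<close>

lemma J_unitary_column1_of_H:
  assumes u: "J_unitary f"
  obtains B l where "B \<in> Hgrp cj G" "nrm l = 1" "\<And>i. (f ** diag3 l 1 1) $ i $ 1 = B $ i $ 1"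
proof -
  define a where "a = f$1$1"
  have "cj a * a - cj (f$2$1) * f$2$1 - cj (f$3$1) * f$3$1 = 1"
    using J_unitary_entry[OF u, of 1 1] by (simp add: a_def Jmat_def)
  then have na: "nrm a - nrm (f$2$1) - nrm (f$3$1) = 1"
    by (intro rl_inj) (simp add: cj_mult_self rl_diff)
  obtain l where l: "a * l = rl (sqrt (nrm a))" "nrm l = 1"
    using unit_factor_exists by blast
  define y2 where "y2 = f$2$1 * l"
  define y3 where "y3 = f$3$1 * l"
  define s where "s = sqrt (nrm y2 + nrm y3)"
  have "nrm a = 1 + s\<^sup>2"
    using na l(2) by (simp add: s_def y2_def y3_def nrm_mult add_nonneg_nonneg)
  then have c: "sqrt (nrm a) = sqrt (1 + s\<^sup>2)" by simp
  obtain u2 u3 where y: "y2 = u2 * rl s" "y3 = u3 * rl s" and nu: "nrm u2 + nrm u3 = 1"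
    using polar_pair unfolding s_def by blast
  obtain m where m: "nrm m = 1" "nrm (u3 * m) \<le> 1" "rl (sqrt (1 - nrm (u3 * m))) = u2 * m"
    using unit_vector_rotation_column[OF nu] by blast
  define R where "R = rotation (u3 * m) ** diag3 1 (cj m) 1"
  have "inverse_pair R (diag3 1 (cj (cj m)) 1 ** ctrans cj (rotation (u3 * m)))"
    unfolding R_def using inverse_pair_rotation[OF m(2)] inverse_pair_unit_diag3(2)[of "cj m"] m(1)
    by (intro inverse_pair_mult) (simp_all add: nrm_cj)
  then have iR: "inverse_pair R (ctrans cj R)" unfolding R_def by (simp add: ctrans_mult ctrans_diag3)
  have uR: "J_unitary R"
    unfolding R_def using m by (intro J_unitary_mult rotation_J_unitary J_unitary_diag3) (simp_all add: nrm_cj)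
  have R: "R$1$1 = 1" "R$1$2 = 0" "R$1$3 = 0" "R$2$1 = 0" "R$3$1 = 0" "R$2$2 = u2" "R$3$2 = u3"
    using m(1,3) unfolding R_def rotation_def
    by (simp_all add: diag3_mat3 mat3_mult mult.assoc mult_cj_self)
  have "(R ** boost s ** ctrans cj R) $ i $ 1 = R$i$1 * rl (sqrt (1 + s\<^sup>2)) + R$i$2 * rl s" for i
    using R by (simp add: matrix_mult_nth3 ctrans_def boost_def)
  moreover have "(f ** diag3 l 1 1) $ i $ 1 = f$i$1 * l" for i
    by (simp add: matrix_mult_nth3 diag3_def)
  ultimately have "(f ** diag3 l 1 1) $ i $ 1 = (R ** boost s ** ctrans cj R) $ i $ 1" for i
    using exhaust_3[of i] R l(1) y c by (auto simp: a_def y2_def y3_def)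
  then show ?thesis by (rule that[OF conj_boost_H[OF iR uR, of s] l(2)])
qed

lemma J_unitary_column1_e1_decomp:
  assumes u: "J_unitary M" and col: "M$1$1 = 1" "M$2$1 = 0" "M$3$1 = 0"
  obtains R x y z where "R \<in> Hgrp cj G" "x \<noteq> 0" "y \<noteq> 0" "z \<noteq> 0" "M = R ** diag3 x y z"
proof -
  have row: "M$1$2 = 0" "M$1$3 = 0"
    using J_unitary_entry[OF u, of 1 2] J_unitary_entry[OF u, of 1 3] col by (simp_all add: Jmat_def)
  have "- (cj (M$2$2) * M$2$2) - cj (M$3$2) * M$3$2 = -1"
    using J_unitary_entry[OF u, of 2 2] row by (simp add: Jmat_def)
  then have "nrm (M$2$2) + nrm (M$3$2) = 1"
    using rl_inj[of "- nrm (M$2$2) - nrm (M$3$2)" "-1"] by (simp add: cj_mult_self rl_diff rl_minus)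
  then obtain m where m: "nrm m = 1" "nrm (M$3$2 * m) \<le> 1" "rl (sqrt (1 - nrm (M$3$2 * m))) = M$2$2 * m"
    using unit_vector_rotation_column by blast
  define R where "R = rotation (M$3$2 * m)"
  have iR: "inverse_pair R (ctrans cj R)" and uR: "J_unitary R"
    unfolding R_def using inverse_pair_rotation rotation_J_unitary m(2) by blast+
  define M2 where "M2 = ctrans cj R ** (M ** diag3 1 m 1)"
  have uM2: "J_unitary M2"
    unfolding M2_def by (intro J_unitary_mult J_unitary_ctrans[OF iR uR] u J_unitary_diag3 m(1))
  have "(M ** diag3 1 m 1) $ i $ j = R $ i $ j" if "j = 1 \<or> j = 2" for i j
    using exhaust_3[of i] that col row m(3)
    by (subst mat3_entries[of M]) (auto simp: R_def rotation_def diag3_mat3 mat3_mult)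
  then have M2: "M2 $ i $ j = mat 1 $ i $ j" if "j = 1 \<or> j = 2" for i j
    unfolding M2_def using inverse_mult_same_column[OF iR] that by blast
  have "M2$1$3 = 0" "M2$2$3 = 0"
    using J_unitary_entry[OF uM2, of 1 3] J_unitary_entry[OF uM2, of 2 3] M2
    by (simp_all add: Jmat_def mat_def)
  moreover have "- (cj (M2$3$3) * M2$3$3) = -1"
    using J_unitary_entry[OF uM2, of 3 3] M2 calculation by (simp add: Jmat_def mat_def)
  then have "M2$3$3 \<noteq> 0" by auto
  ultimately obtain v where M2d: "M2 = diag3 1 1 v" "v \<noteq> 0"
    using M2 by (auto simp: matrix3_eq_iff diag3_mat3 mat_def)
  have "R ** M2 ** diag3 1 (cj m) 1 = M"
    unfolding M2_def using iR inverse_pair_unit_diag3(2)[OF m(1)]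
    by (simp add: inverse_pair_def matrix_mul_assoc)
      (metis inverse_pair_def inverse_pair_unit_diag3(2) m(1) matrix_mul_assoc matrix_mul_lid matrix_mul_rid)
  then have "M = R ** (diag3 1 1 v ** diag3 1 (cj m) 1)"
    unfolding M2d(1) by (simp add: matrix_mul_assoc)
  then have "M = R ** diag3 1 (cj m) v"
    by (simp add: diag3_mult)
  moreover have "cj m \<noteq> 0" using m(1) by auto
  moreover have "R \<in> Hgrp cj G" unfolding R_def by (rule rotation_H[OF m(2)])
  ultimately show ?thesis using that M2d(2) scalar_one_neq_zero by blast
qed

lemma J_unitary_eq_H_mult_diag3:
  assumes u: "J_unitary f"
  obtains h x y z where "h \<in> Hgrp cj G" "x \<noteq> 0" "y \<noteq> 0" "z \<noteq> 0" "f = h ** diag3 x y z"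
proof -
  obtain B l where B: "B \<in> Hgrp cj G" and l: "nrm l = 1"
    and col: "\<And>i. (f ** diag3 l 1 1) $ i $ 1 = B $ i $ 1"
    using J_unitary_column1_of_H[OF u] by blast
  have iB: "inverse_pair B (minv B)" using G_inverse_pair[OF H_G[OF B]] .
  define M where "M = minv B ** (f ** diag3 l 1 1)"
  have uM: "J_unitary M"
    unfolding M_def by (intro J_unitary_mult H_J_unitary[OF H_minv[OF B]] u J_unitary_diag3 l)
  have "M $ i $ 1 = mat 1 $ i $ 1" for i
    unfolding M_def using inverse_mult_same_column[OF iB col] .
  then have "M$1$1 = 1" "M$2$1 = 0" "M$3$1 = 0" by (simp_all add: mat_def)
  then obtain R x y z where R: "R \<in> Hgrp cj G" "x \<noteq> 0" "y \<noteq> 0" "z \<noteq> 0" "M = R ** diag3 x y z"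
    by (rule J_unitary_column1_e1_decomp[OF uM])
  have "f = B ** M ** diag3 (cj l) 1 1"
    unfolding M_def using iB inverse_pair_unit_diag3(1)[OF l]
    by (simp add: inverse_pair_def matrix_mul_assoc)
      (metis inverse_pair_def inverse_pair_unit_diag3(1) l matrix_mul_assoc matrix_mul_rid)
  also have "\<dots> = (B ** R) ** (diag3 x y z ** diag3 (cj l) 1 1)"
    using R(5) by (simp add: matrix_mul_assoc)
  also have "\<dots> = (B ** R) ** diag3 (x * cj l) y z"
    by (simp add: diag3_mult)
  moreover have "cj l \<noteq> 0" using l by auto
  ultimately show ?thesis
    using that[OF H_mult[OF B R(1)], of "x * cj l" y z] R(2-4) by simp
qed

subsection \<open>The three orbits\<close>

lemma H_conjgrp_P1_neq_weyl:
  assumes h: "h \<in> Hgrp cj G" and e: "conjgrp h (P1 G) = conjgrp w (P1 G)"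
    and w: "w \<in> G" "w$1$1 = 0" "w$2$1 = -1" "w$3$1 = 0"
  shows False
proof -
  define p where "p = minv w ** h"
  have p: "p$2$1 = 0" "p$3$1 = 0"
    using conjgrp_P1_eqD[OF H_G[OF h] w(1) e] by (simp_all add: p_def P1_eq upper_triangular_def)
  have "h = w ** p"
    unfolding p_def using G_inverse_pair[OF w(1)] by (simp add: inverse_pair_def matrix_mul_assoc)
  then have "h$1$1 = 0" "h$2$1 = - p$1$1" "h$3$1 = 0"
    using p w by (simp_all add: matrix_mult_nth3)
  then show False
    using J_unitary_entry[OF H_J_unitary[OF h], of 1 1] neg_cj_mult_self_neq_one
    by (simp add: Jmat_def cj_minus)
qed

lemma H_conjgrp_P2_neq_P3:
  assumes h: "h \<in> Hgrp cj G" and e: "conjgrp h (P2 G) = P3 G"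
  shows False
proof -
  have ih: "inverse_pair h (minv h)" using G_inverse_pair[OF H_G[OF h]] .
  have "conjgrp (h ** w2) (P1 G) = conjgrp w3 (P1 G)"
    using e conjgrp_conjgrp[OF ih inverse_pair_w2] by (simp add: P2_eq_conjgrp_w2 P3_eq_conjgrp_w3)
  then have "minv w3 ** (h ** w2) \<in> P1 G"
    using conjgrp_P1_eqD[OF G_mult[OF H_G[OF h] w2_G] w3_G] by simp
  moreover define p where "p = minv w3 ** (h ** w2)"
  ultimately have p: "p$3$1 = 0" "p$3$2 = 0" by (simp_all add: P1_eq upper_triangular_def)
  have "h = w3 ** p ** w2'"
    unfolding p_def minv_eqI[OF inverse_pair_w3] using inverse_pair_w3 inverse_pair_w2
    by (simp add: inverse_pair_def matrix_mul_assoc inverse_pair_cancel)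
  then have "h$1$1 = 0" "h$1$2 = 0" "h$1$3 = p$3$3"
    using p by (simp_all add: matrix_mult_nth3 w3_def w2'_def)
  then show False
    using J_unitary_right_entry[OF ih H_J_unitary[OF h], of 1 1] neg_cj_mult_self_neq_one
    by (simp add: Jmat_def cj_minus)
qed

lemma sigma_parabolic_Horbit:
  assumes "P \<in> sigma_parabolics cj G"
  shows "Horbit cj G P \<in> {Horbit cj G (P1 G), Horbit cj G (P2 G), Horbit cj G (P3 G)}"
proof -
  obtain f f' where "inverse_pair f f'" and u: "J_unitary f"
    and P: "P = conjgrp f (P1 G) \<or> P = conjgrp f (P2 G) \<or> P = conjgrp f (P3 G)"
    by (rule sigma_parabolic_J_unitary_conj[OF assms])
  obtain h x y z where h: "h \<in> Hgrp cj G" and nz: "x \<noteq> 0" "y \<noteq> 0" "z \<noteq> 0"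
    and f: "f = h ** diag3 x y z"
    by (rule J_unitary_eq_H_mult_diag3[OF u])
  have "Horbit cj G (conjgrp f X) = Horbit cj G X" if "conjgrp (diag3 x y z) X = X" for X
  proof -
    have "conjgrp f X = conjgrp h (conjgrp (diag3 x y z) X)"
      unfolding f by (rule conjgrp_conjgrp[OF G_inverse_pair[OF H_G[OF h]] inverse_pair_diag3[OF nz], symmetric])
    then show ?thesis using that Horbit_conjgrp[OF h] by simp
  qed
  then show ?thesis
    using P conjgrp_diag3[OF nz] by (elim disjE) simp_all
qed

theorem sigma_parabolics_three_orbits: "three_orbits cj G"
proof -
  have w2: "w2 \<in> G" "w2$1$1 = 0" "w2$2$1 = -1" "w2$3$1 = 0" and w3: "w3 \<in> G" "w3$1$1 = 0" "w3$2$1 = -1" "w3$3$1 = 0"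
    using w2_G w3_G by (simp_all add: w2_def w3_def)
  have "Horbit cj G (P1 G) \<noteq> Horbit cj G (P2 G)"
    using Horbit_eq_imp_conjgrp H_conjgrp_P1_neq_weyl[OF _ _ w2] P2_eq_conjgrp_w2 by metis
  moreover have "Horbit cj G (P1 G) \<noteq> Horbit cj G (P3 G)"
    using Horbit_eq_imp_conjgrp H_conjgrp_P1_neq_weyl[OF _ _ w3] P3_eq_conjgrp_w3 by metis
  moreover have "Horbit cj G (P2 G) \<noteq> Horbit cj G (P3 G)"
    using Horbit_eq_imp_conjgrp H_conjgrp_P2_neq_P3 by metis
  moreover have "Horbit cj G ` sigma_parabolics cj G = {Horbit cj G (P1 G), Horbit cj G (P2 G), Horbit cj G (P3 G)}"
    using sigma_parabolic_Horbit standard_sigma_parabolics by blast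
  ultimately show ?thesis
    unfolding three_orbits_def using standard_sigma_parabolics by simp
qed

end

section \<open>The three cases \<open>\<real>\<close>, \<open>\<complex>\<close> and \<open>\<bbbH>\<close>\<close>

lemma inverse_pair_minv_of_det: "det (g::'a::field^3^3) \<noteq> 0 \<Longrightarrow> inverse_pair g (minv g)"
  using invertible_det_nz[of g] unfolding invertible_def by (metis inverse_pair_def inverse_pair_minv)

lemma det_inverse_pair: "inverse_pair (a::'a::comm_ring_1^'n^'n) b \<Longrightarrow> det a * det b = 1"
  unfolding inverse_pair_def by (metis det_I det_mul)

lemma det_transvection: "i \<noteq> j \<Longrightarrow> det (transvection i j (q::'a::comm_ring_1)) = 1"
  using exhaust_3[of i] exhaust_3[of j] by (auto simp: det_3 transvection_def)

lemma det_cnj: "det (\<chi> i j. cnj ((A::complex^'n^'n)$i$j)) = cnj (det A)"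
  unfolding det_def by (simp add: cnj_sum cnj_prod)

lemma sl3_group_SL3_field:
  fixes cj :: "'a::{field,topological_space} \<Rightarrow> 'a"
  assumes "star_division_algebra cj rl nrm" and det_ctrans: "\<And>A. det (ctrans cj A) = cj (det A)"
  shows "sl3_group cj rl nrm {g. det g = 1}"
proof (intro sl3_group.intro sl3_group_axioms.intro assms(1))
  fix g h a b :: "'a^3^3"
  assume g: "g \<in> {g. det g = 1}"
  then show "inverse_pair g (minv g)" by (simp add: inverse_pair_minv_of_det)
  then show "minv g \<in> {g. det g = 1}" using g det_inverse_pair by fastforce
  show "h \<in> {g. det g = 1} \<Longrightarrow> g ** h \<in> {g. det g = 1}" using g by (simp add: det_mul)
  show "inverse_pair a b \<Longrightarrow> a ** g ** b \<in> {g. det g = 1}"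
    using g det_inverse_pair[of a b] by (simp add: det_mul mult.commute)
  show "ctrans cj g \<in> {g. det g = 1}"
    using g det_ctrans star_division_algebra.cj_one[OF assms(1)] by simp
next
  fix i j :: 3 and q :: 'a
  show "i \<noteq> j \<Longrightarrow> transvection i j q \<in> {g. det g = 1}" by (simp add: det_transvection)
qed

lemma SL3_real_sl3_group: "sl3_group (\<lambda>x::real. x) (\<lambda>r. r) (\<lambda>x. x * x) SL3_real"
  unfolding SL3_real_def
proof (rule sl3_group_SL3_field)
  show "star_division_algebra (\<lambda>x::real. x) (\<lambda>r. r) (\<lambda>x. x * x)"
  proof unfold_locales
    show "continuous_on UNIV (\<lambda>p::real \<times> real. fst p * snd p)"
      "continuous_on UNIV (\<lambda>p::real \<times> real. fst p + snd p)"
      by (intro continuous_intros)+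
  qed auto
  show "det (ctrans (\<lambda>x. x) A) = det A" for A :: "real^3^3"
    using det_transpose[of A] by (simp add: ctrans_def transpose_def)
qed

lemma SL3_complex_sl3_group: "sl3_group cnj complex_of_real (\<lambda>z. (cmod z)\<^sup>2) SL3_complex"
  unfolding SL3_complex_def
proof (rule sl3_group_SL3_field)
  show "star_division_algebra cnj complex_of_real (\<lambda>z. (cmod z)\<^sup>2)"
  proof unfold_locales
    fix x :: complex
    show "cnj x * x = complex_of_real ((cmod x)\<^sup>2)" "x * cnj x = complex_of_real ((cmod x)\<^sup>2)"
      using complex_norm_square[of x] by (simp_all add: mult.commute)
    show "cnj x = x \<Longrightarrow> \<exists>r. x = complex_of_real r" by (metis Reals_cnj_iff Reals_def rangeE)
    show "continuous_on UNIV (\<lambda>p::complex \<times> complex. fst p * snd p)"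
      "continuous_on UNIV (\<lambda>p::complex \<times> complex. fst p + snd p)"
      by (intro continuous_intros)+
  qed (auto intro: continuous_intros)
  show "det (ctrans cnj A) = cnj (det A)" for A :: "complex^3^3"
    using det_transpose[of "\<chi> i j. cnj (A$i$j)"] by (simp add: ctrans_def transpose_def det_cnj)
qed

subsection \<open>Quaternions\<close>

lemma quat_eq_iff: "x = y \<longleftrightarrow> qRe x = qRe y \<and> qI x = qI y \<and> qJ x = qJ y \<and> qK x = qK y"
  by (cases x, cases y) auto

lemma quat_components [simp]:
  "qRe 0 = 0" "qI 0 = 0" "qJ 0 = 0" "qK 0 = 0"
  "qRe 1 = 1" "qI 1 = 0" "qJ 1 = 0" "qK 1 = 0"
  "qRe (x + y) = qRe x + qRe y" "qI (x + y) = qI x + qI y" "qJ (x + y) = qJ x + qJ y" "qK (x + y) = qK x + qK y"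
  "qRe (x - y) = qRe x - qRe y" "qI (x - y) = qI x - qI y" "qJ (x - y) = qJ x - qJ y" "qK (x - y) = qK x - qK y"
  "qRe (- x) = - qRe x" "qI (- x) = - qI x" "qJ (- x) = - qJ x" "qK (- x) = - qK x"
  "qRe (x * y) = qRe x * qRe y - qI x * qI y - qJ x * qJ y - qK x * qK y"
  "qI (x * y) = qRe x * qI y + qI x * qRe y + qJ x * qK y - qK x * qJ y"
  "qJ (x * y) = qRe x * qJ y - qI x * qK y + qJ x * qRe y + qK x * qI y"
  "qK (x * y) = qRe x * qK y + qI x * qJ y - qJ x * qI y + qK x * qRe y"
  "qRe (quat_cnj x) = qRe x" "qI (quat_cnj x) = - qI x" "qJ (quat_cnj x) = - qJ x" "qK (quat_cnj x) = - qK x"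
  by (simp_all add: zero_quat_def one_quat_def plus_quat_def minus_quat_def uminus_quat_def times_quat_def
      quat_cnj_def)

definition quat_of_real :: "real \<Rightarrow> quat" where
  "quat_of_real r = Quat r 0 0 0"

definition quat_norm2 :: "quat \<Rightarrow> real" where
  "quat_norm2 x = (qRe x)\<^sup>2 + (qI x)\<^sup>2 + (qJ x)\<^sup>2 + (qK x)\<^sup>2"

lemma quat_of_real_components [simp]:
  "qRe (quat_of_real r) = r" "qI (quat_of_real r) = 0" "qJ (quat_of_real r) = 0" "qK (quat_of_real r) = 0"
  by (simp_all add: quat_of_real_def)

lemma continuous_on_quat_coords_iff:
  fixes f :: "'b::topological_space \<Rightarrow> quat"
  shows "continuous_on S f \<longleftrightarrow> continuous_on S (\<lambda>x. quat_coords (f x))"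
proof
  assume c: "continuous_on S f"
  show "continuous_on S (\<lambda>x. quat_coords (f x))"
    unfolding continuous_on_open_invariant
  proof (intro allI impI)
    fix B :: "(real \<times> real \<times> real \<times> real) set" assume "open B"
    then have "open (quat_coords -` B)" unfolding open_quat_def by blast
    then obtain A where "open A" "A \<inter> S = f -` (quat_coords -` B) \<inter> S"
      using c unfolding continuous_on_open_invariant by blast
    then show "\<exists>A. open A \<and> A \<inter> S = (\<lambda>x. quat_coords (f x)) -` B \<inter> S" by auto
  qed
next
  assume c: "continuous_on S (\<lambda>x. quat_coords (f x))"
  show "continuous_on S f"
    unfolding continuous_on_open_invariant
  proof (intro allI impI)
    fix B :: "quat set" assume "open B"
    then obtain V where V: "open V" "B = quat_coords -` V" unfolding open_quat_def by blast
    then obtain A where "open A" "A \<inter> S = (\<lambda>x. quat_coords (f x)) -` V \<inter> S"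
      using c unfolding continuous_on_open_invariant by blast
    then show "\<exists>A. open A \<and> A \<inter> S = f -` B \<inter> S" using V by auto
  qed
qed

lemma continuous_on_quat_iff:
  fixes f :: "'b::topological_space \<Rightarrow> quat"
  shows "continuous_on S f \<longleftrightarrow> continuous_on S (\<lambda>x. qRe (f x)) \<and> continuous_on S (\<lambda>x. qI (f x))
    \<and> continuous_on S (\<lambda>x. qJ (f x)) \<and> continuous_on S (\<lambda>x. qK (f x))"
  unfolding continuous_on_quat_coords_iff quat_coords_def
proof (intro iffI conjI)
  assume c: "continuous_on S (\<lambda>x. (qRe (f x), qI (f x), qJ (f x), qK (f x)))"
  show "continuous_on S (\<lambda>x. qRe (f x))" using continuous_on_fst[OF c] by simp
  show "continuous_on S (\<lambda>x. qI (f x))" using continuous_on_fst[OF continuous_on_snd[OF c]] by simp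
  show "continuous_on S (\<lambda>x. qJ (f x))"
    using continuous_on_fst[OF continuous_on_snd[OF continuous_on_snd[OF c]]] by simp
  show "continuous_on S (\<lambda>x. qK (f x))"
    using continuous_on_snd[OF continuous_on_snd[OF continuous_on_snd[OF c]]] by simp
qed (intro continuous_on_Pair; blast)

lemma continuous_quat_operations:
  "continuous_on UNIV (\<lambda>p::quat \<times> quat. fst p * snd p)"
  "continuous_on UNIV (\<lambda>p::quat \<times> quat. fst p + snd p)"
  "continuous_on UNIV quat_cnj"
  "continuous_on UNIV quat_of_real"
proof -
  have "continuous_on UNIV (\<lambda>x::quat. x)" "continuous_on UNIV (\<lambda>p::quat \<times> quat. fst p)"
    "continuous_on UNIV (\<lambda>p::quat \<times> quat. snd p)"
    by (intro continuous_intros)+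
  note components = this[unfolded continuous_on_quat_iff]
  show "continuous_on UNIV (\<lambda>p::quat \<times> quat. fst p * snd p)"
    "continuous_on UNIV (\<lambda>p::quat \<times> quat. fst p + snd p)" "continuous_on UNIV quat_cnj"
    "continuous_on UNIV quat_of_real"
    unfolding continuous_on_quat_iff using components by (simp_all add: continuous_intros)
qed

lemma quat_cplx_nth [simp]:
  "quat_cplx q $ 1 $ 1 = Complex (qRe q) (qI q)" "quat_cplx q $ 1 $ 2 = Complex (qJ q) (qK q)"
  "quat_cplx q $ 2 $ 1 = - cnj (Complex (qJ q) (qK q))" "quat_cplx q $ 2 $ 2 = cnj (Complex (qRe q) (qI q))"
  by (simp_all add: quat_cplx_def Let_def)

lemma quat_cplx_entries:
  "quat_cplx (x + y) $ i $ k = quat_cplx x $ i $ k + quat_cplx y $ i $ k"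
  "quat_cplx (x * y) $ i $ k = quat_cplx x $ i $ 1 * quat_cplx y $ 1 $ k + quat_cplx x $ i $ 2 * quat_cplx y $ 2 $ k"
  "quat_cplx (quat_cnj x) $ i $ k = cnj (quat_cplx x $ k $ i)"
  "quat_cplx 0 $ i $ k = 0"
  "quat_cplx 1 $ i $ k = (if i = k then 1 else 0)"
  using exhaust_2[of i] exhaust_2[of k] by (auto simp: complex_eq_iff algebra_simps)

lemma sum_UNIV_3x2:
  "sum f (UNIV :: (3 \<times> 2) set) = f (1,1) + f (1,2) + f (2,1) + f (2,2) + f (3,1) + f (3,2)"
proof -
  have "sum f (UNIV :: (3 \<times> 2) set) = (\<Sum>a\<in>UNIV. \<Sum>i\<in>UNIV. f (a, i))"
    unfolding UNIV_Times_UNIV[symmetric] by (rule sum.cartesian_product')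
  then show ?thesis by (simp add: sum_3 sum_2 algebra_simps)
qed

lemma matrix_mult_nth_3x2:
  "((X::complex^(3\<times>2)^(3\<times>2)) ** Y) $ p $ q =
     X$p$(1,1) * Y$(1,1)$q + X$p$(1,2) * Y$(1,2)$q + X$p$(2,1) * Y$(2,1)$q + X$p$(2,2) * Y$(2,2)$q
     + X$p$(3,1) * Y$(3,1)$q + X$p$(3,2) * Y$(3,2)$q"
  by (simp add: matrix_matrix_mult_def sum_UNIV_3x2)

lemma qmat_cplx_nth: "qmat_cplx g $ p $ q = quat_cplx (g $ fst p $ fst q) $ snd p $ snd q"
  by (simp add: qmat_cplx_def)

lemma qmat_cplx_mult: "qmat_cplx (A ** B) = qmat_cplx A ** qmat_cplx B"
  by (simp add: vec_eq_iff qmat_cplx_nth matrix_mult_nth3 matrix_mult_nth_3x2 quat_cplx_entries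
      algebra_simps)

lemma qmat_cplx_one: "qmat_cplx (mat 1) = mat 1"
  by (auto simp: vec_eq_iff qmat_cplx_nth mat_def quat_cplx_entries prod_eq_iff)

lemma qmat_cplx_inj: "qmat_cplx A = qmat_cplx B \<Longrightarrow> A = B"
proof -
  assume e: "qmat_cplx A = qmat_cplx B"
  have "A $ a $ b = B $ a $ b" for a b
    using arg_cong[OF e, of "\<lambda>M. M $ (a,1) $ (b,1)"] arg_cong[OF e, of "\<lambda>M. M $ (a,1) $ (b,2)"]
    by (simp add: qmat_cplx_nth quat_eq_iff)
  then show ?thesis by (simp add: vec_eq_iff)
qed

lemma qmat_cplx_ctrans: "qmat_cplx (ctrans quat_cnj g) = transpose (\<chi> p q. cnj (qmat_cplx g $ p $ q))"
  by (simp add: vec_eq_iff qmat_cplx_nth ctrans_def transpose_def quat_cplx_entries)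

definition row_add :: "'n::finite \<Rightarrow> 'n \<Rightarrow> complex \<Rightarrow> complex^'n^'n \<Rightarrow> complex^'n^'n" where
  "row_add k l c A = (\<chi> r. if r = k then row k A + c *s row l A else row r A)"

lemma det_qmat_cplx_transvection:
  assumes ij: "i \<noteq> j"
  shows "det (qmat_cplx (transvection i j q)) = 1"
proof -
  define B where "B = row_add (i,2) (j,2) (quat_cplx q $2$2) (row_add (i,2) (j,1) (quat_cplx q $2$1)
     (row_add (i,1) (j,2) (quat_cplx q $1$2) (row_add (i,1) (j,1) (quat_cplx q $1$1)
       (mat 1 :: complex^(3\<times>2)^(3\<times>2)))))"
  have "det B = 1" unfolding B_def row_add_def using ij by (simp add: det_row_operation)
  moreover have "qmat_cplx (transvection i j q) $ (a,x) $ (b,y) = B $ (a,x) $ (b,y)" for a b x y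
    using exhaust_2[of x] exhaust_2[of y] ij
    by (auto simp: B_def row_add_def row_def qmat_cplx_nth transvection_def mat_def quat_cplx_entries
        complex_eq_iff)
  ultimately show ?thesis by (metis vec_eq_iff surj_pair)
qed

text \<open>
  Complex matrices of the form \<open>qmat_cplx g\<close> are exactly the fixed points of the antilinear
  involution \<open>X \<mapsto> \<Omega> X\<^sup>- \<Omega>\<inverse>\<close>, \<open>\<Omega> = diag(\<omega>, \<omega>, \<omega>)\<close>, \<open>\<omega> = [[0, 1], [-1, 0]]\<close>.
\<close>

definition swap2 :: "2 \<Rightarrow> 2" where
  "swap2 i = (if i = 1 then 2 else 1)"

definition sign2 :: "2 \<Rightarrow> complex" where
  "sign2 i = (if i = 1 then 1 else -1)"

lemma swap2_simps [simp]: "swap2 1 = 2" "swap2 2 = 1"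
  by (simp_all add: swap2_def)

lemma sign2_simps [simp]: "sign2 1 = 1" "sign2 2 = -1"
  by (simp_all add: sign2_def)

definition quat_struct :: "complex^(3\<times>2)^(3\<times>2) \<Rightarrow> complex^(3\<times>2)^(3\<times>2)" where
  "quat_struct X = (\<chi> p q. sign2 (snd p) * sign2 (snd q) * cnj (X $ (fst p, swap2 (snd p)) $ (fst q, swap2 (snd q))))"

lemma quat_struct_nth: "quat_struct X $ (a,i) $ (b,k) = sign2 i * sign2 k * cnj (X $ (a, swap2 i) $ (b, swap2 k))"
  by (simp add: quat_struct_def)

lemma quat_struct_mult: "quat_struct (X ** Y) = quat_struct X ** quat_struct Y"
proof -
  have "quat_struct (X ** Y) $ (a,i) $ (c,k) = (quat_struct X ** quat_struct Y) $ (a,i) $ (c,k)" for a c i k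
    using exhaust_2[of i] exhaust_2[of k] by (auto simp: quat_struct_nth matrix_mult_nth_3x2 algebra_simps)
  then show ?thesis by (simp add: vec_eq_iff)
qed

lemma quat_struct_one: "quat_struct (mat 1) = mat 1"
proof -
  have "quat_struct (mat 1) $ (a,i) $ (c,k) = mat 1 $ (a,i) $ (c,k)" for a c i k
    using exhaust_2[of i] exhaust_2[of k] by (auto simp: quat_struct_nth mat_def)
  then show ?thesis by (simp add: vec_eq_iff)
qed

lemma quat_struct_qmat_cplx: "quat_struct (qmat_cplx g) = qmat_cplx g"
proof -
  have "quat_struct (qmat_cplx g) $ (a,i) $ (c,k) = qmat_cplx g $ (a,i) $ (c,k)" for a c i k
    using exhaust_2[of i] exhaust_2[of k] by (auto simp: quat_struct_nth qmat_cplx_nth)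
  then show ?thesis by (simp add: vec_eq_iff)
qed

definition cplx_qmat :: "complex^(3\<times>2)^(3\<times>2) \<Rightarrow> quat^3^3" where
  "cplx_qmat M = (\<chi> a b. Quat (Re (M $ (a,1) $ (b,1))) (Im (M $ (a,1) $ (b,1)))
     (Re (M $ (a,1) $ (b,2))) (Im (M $ (a,1) $ (b,2))))"

lemma qmat_cplx_cplx_qmat:
  assumes "quat_struct M = M"
  shows "qmat_cplx (cplx_qmat M) = M"
proof -
  have "qmat_cplx (cplx_qmat M) $ (a,i) $ (c,k) = M $ (a,i) $ (c,k)" for a c i k
  proof -
    have "M $ (a,2) $ (c,1) = - cnj (M $ (a,1) $ (c,2))" "M $ (a,2) $ (c,2) = cnj (M $ (a,1) $ (c,1))"
      using arg_cong[OF assms, of "\<lambda>X. X $ (a,2) $ (c,1)"] arg_cong[OF assms, of "\<lambda>X. X $ (a,2) $ (c,2)"]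
      by (simp_all add: quat_struct_nth)
    then show ?thesis using exhaust_2[of i] exhaust_2[of k]
      by (auto simp: qmat_cplx_nth cplx_qmat_def complex_eq_iff)
  qed
  then show ?thesis by (simp add: vec_eq_iff)
qed

text \<open>The complex inverse of \<open>qmat_cplx g\<close> is again fixed by \<open>quat_struct\<close>, hence quaternionic.\<close>

lemma SL3_quat_inverse_pair:
  assumes "g \<in> SL3_quat"
  shows "inverse_pair g (minv g)"
proof -
  have "det (qmat_cplx g) \<noteq> 0" using assms by (simp add: SL3_quat_def)
  then obtain M where M: "qmat_cplx g ** M = mat 1" "M ** qmat_cplx g = mat 1"
    using invertible_det_nz[of "qmat_cplx g"] unfolding invertible_def by blast
  have "quat_struct M ** qmat_cplx g = mat 1"
    using arg_cong[OF M(2), of quat_struct] by (simp add: quat_struct_mult quat_struct_qmat_cplx quat_struct_one)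
  then have "quat_struct M = M" using M(1) by (metis matrix_mul_assoc matrix_mul_lid matrix_mul_rid)
  then have "qmat_cplx (g ** cplx_qmat M) = qmat_cplx (mat 1)" "qmat_cplx (cplx_qmat M ** g) = qmat_cplx (mat 1)"
    using M by (simp_all add: qmat_cplx_mult qmat_cplx_cplx_qmat qmat_cplx_one)
  then have "inverse_pair g (cplx_qmat M)" unfolding inverse_pair_def using qmat_cplx_inj by blast
  then show ?thesis by (rule inverse_pair_minv)
qed

lemma det_qmat_cplx_inverse_pair: "inverse_pair a b \<Longrightarrow> det (qmat_cplx a) * det (qmat_cplx b) = 1"
  unfolding inverse_pair_def by (metis qmat_cplx_mult qmat_cplx_one det_I det_mul)

lemma quat_star_division_algebra: "star_division_algebra quat_cnj quat_of_real quat_norm2"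
proof unfold_locales
  fix x y :: quat and r s :: real
  show "quat_cnj (x + y) = quat_cnj x + quat_cnj y" by (simp add: quat_eq_iff)
  show "quat_cnj (x * y) = quat_cnj y * quat_cnj x" by (simp add: quat_eq_iff algebra_simps)
  show "quat_cnj (quat_cnj x) = x" by (simp add: quat_eq_iff)
  show "quat_cnj (quat_of_real r) = quat_of_real r" by (simp add: quat_eq_iff)
  show "quat_of_real (r + s) = quat_of_real r + quat_of_real s" by (simp add: quat_eq_iff)
  show "quat_of_real (r * s) = quat_of_real r * quat_of_real s" by (simp add: quat_eq_iff)
  show "quat_of_real 1 = 1" by (simp add: quat_eq_iff)
  show "quat_of_real r = quat_of_real s \<Longrightarrow> r = s" by (simp add: quat_eq_iff)
  show "quat_of_real r * x = x * quat_of_real r" by (simp add: quat_eq_iff algebra_simps)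
  show "quat_cnj x * x = quat_of_real (quat_norm2 x)" "x * quat_cnj x = quat_of_real (quat_norm2 x)"
    by (simp_all add: quat_eq_iff quat_norm2_def algebra_simps power2_eq_square)
  show "0 \<le> quat_norm2 x" by (simp add: quat_norm2_def)
  show "quat_norm2 x = 0 \<Longrightarrow> x = 0" by (simp add: quat_norm2_def quat_eq_iff add_nonneg_eq_0_iff)
  show "quat_cnj x = x \<Longrightarrow> \<exists>r. x = quat_of_real r"
    by (intro exI[of _ "qRe x"]) (simp add: quat_eq_iff)
qed (fact continuous_quat_operations)+

lemma SL3_quat_sl3_group: "sl3_group quat_cnj quat_of_real quat_norm2 SL3_quat"
proof (intro sl3_group.intro sl3_group_axioms.intro quat_star_division_algebra)
  fix g h a b :: "quat^3^3" and i j :: 3 and q :: quat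
  show "g \<in> SL3_quat \<Longrightarrow> inverse_pair g (minv g)" by (rule SL3_quat_inverse_pair)
  show "g \<in> SL3_quat \<Longrightarrow> h \<in> SL3_quat \<Longrightarrow> g ** h \<in> SL3_quat"
    by (simp add: SL3_quat_def qmat_cplx_mult det_mul)
  show "g \<in> SL3_quat \<Longrightarrow> minv g \<in> SL3_quat"
    using det_qmat_cplx_inverse_pair[OF SL3_quat_inverse_pair] by (simp add: SL3_quat_def)
  show "g \<in> SL3_quat \<Longrightarrow> inverse_pair a b \<Longrightarrow> a ** g ** b \<in> SL3_quat"
    using det_qmat_cplx_inverse_pair[of a b] by (simp add: SL3_quat_def qmat_cplx_mult det_mul mult.commute)
  show "g \<in> SL3_quat \<Longrightarrow> ctrans quat_cnj g \<in> SL3_quat"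
    by (simp add: SL3_quat_def qmat_cplx_ctrans det_cnj)
  show "i \<noteq> j \<Longrightarrow> transvection i j q \<in> SL3_quat"
    by (simp add: SL3_quat_def det_qmat_cplx_transvection)
qed

theorem proposition1p3:
  shows "three_orbits (\<lambda>x::real. x) SL3_real \<and>
         three_orbits cnj SL3_complex \<and>
         three_orbits quat_cnj SL3_quat"
  using sl3_group.sigma_parabolics_three_orbits[OF SL3_real_sl3_group]
    sl3_group.sigma_parabolics_three_orbits[OF SL3_complex_sl3_group]
    sl3_group.sigma_parabolics_three_orbits[OF SL3_quat_sl3_group] by blast

end
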